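(* Let $u(x,t)$ and $\Phi_n=(\varphi_1,\ldots,\varphi_n)$ be a (smooth) solution of the KdV equation with self-consistent sources of degree $n$, $$u_t+6uu_x+u_{xxx}+4\sum_{j=1}^n\varphi_j\varphi_{j,x}=0,\qquad \varphi_{j,xx}+(\lambda_j+u)\varphi_j=0,\ j=1,\ldots,n,$$ with distinct real constants $\lambda_1,\ldots,\lambda_n$. Let $\xi\notin\{\lambda_1,\ldots,\lambda_n\}$ and let $f$ be a solution of the Lax system $$\phi_{xx}+(\lambda+u)\phi=0,\qquad \phi_t=A_n(\lambda,u,\Phi_n)\phi$$ with $\lambda=\xi$ (belonging to a family $f(x,t;\xi)$ of such solutions depending smoothly on $\xi$, so that $\omega(f,f)$ below is defined). Let $\lambda\neq\xi$ and let $\phi$ be a solution of the same Lax system with spectral parameter $\lambda$. Let $e(t)$ be an arbitrary differentiable function of $t$ and define $$\bar\phi=\phi-\frac{f\,\omega(f,\phi)}{e(t)+\omega(f,f)},\qquad \bar u=u+2\partial_x^2\ln[e(t)+\omega(f,f)],\qquad \bar\varphi_j=\varphi_j-\frac{f\,\omega(f,\varphi_j)}{e(t)+\omega(f,f)},\ j=1,\ldots,n,$$ and $\bar\Phi_n=(\bar\varphi_1,\ldots,\bar\varphi_n)$. Then $$\phi_t-\frac{f_t\,\omega(f,\phi)}{e(t)+\omega(f,f)}+\frac{f\,\partial_t\omega(f,f)}{[e(t)+\omega(f,f)]^2}\,\omega(f,\phi)-\frac{f\,\partial_t\omega(f,\phi)}{e(t)+\omega(f,f)}=A_n(\lambda,\bar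 u,\bar\Phi_n)\bar\phi .$$ (For constant $e(t)\equiv C$ the left-hand side equals $\bar\phi_t$.)
   Context: All functions are functions of $(x,t)$. $W(g,h)=g h_x-g_x h$ denotes the Wronskian. For a spectral parameter $\lambda$ and $\Phi_n=(\varphi_1,\ldots,\varphi_n)$ with $\varphi_j$ associated to $\lambda_j$, the operator $A_n$ is $$A_n(\lambda,u,\Phi_n)\phi=u_x\phi+(4\lambda-2u)\phi_x+\sum_{j=1}^n\frac{\varphi_j}{\lambda_j-\lambda}W(\varphi_j,\phi).$$ If $f$ solves $f_{xx}+(\xi+u)f=0$ and $g$ solves $g_{xx}+(\eta+u)g=0$ with $\eta\neq\xi$, then $\omega(f,g)=\dfrac{W(f,g)}{\xi-\eta}$ (in particular $\omega(f,\phi)=W(f,\phi)/(\xi-\lambda)$ and $\omega(f,\varphi_j)=W(f,\varphi_j)/(\xi-\lambda_j)$). If $f=f(x,t;\xi)$ depends smoothly on $\xi$, then $\omega(f,f)=\lim_{\eta\to\xi}\frac{W(f(\xi),f(\eta))}{\xi-\eta}=-W(f,\partial_\xi f)$; it satisfies $\partial_x\omega(f,f)=f^2$. *)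

theory Defs
  imports "HOL-Analysis.Analysis"
begin

fun Ck_on :: "nat \<Rightarrow> 'a::euclidean_space set \<Rightarrow> ('a \<Rightarrow> real) \<Rightarrow> bool" where
  "Ck_on 0 S g \<longleftrightarrow> continuous_on S g"
| "Ck_on (Suc k) S g \<longleftrightarrow> g differentiable_on S \<and>
      (\<forall>b\<in>Basis. Ck_on k S (\<lambda>p. frechet_derivative g (at p) b))"

definition Cinf_on :: "'a::euclidean_space set \<Rightarrow> ('a \<Rightarrow> real) \<Rightarrow> bool" where
  "Cinf_on S g \<longleftrightarrow> (\<forall>k. Ck_on k S g)"

definition Dx :: "(real \<Rightarrow> real \<Rightarrow> real) \<Rightarrow> real \<Rightarrow> real \<Rightarrow> real" where
  "Dx g = (\<lambda>x t. deriv (\<lambda>y. g y t) x)"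

definition Dt :: "(real \<Rightarrow> real \<Rightarrow> real) \<Rightarrow> real \<Rightarrow> real \<Rightarrow> real" where
  "Dt g = (\<lambda>x t. deriv (\<lambda>s. g x s) t)"

definition Wr :: "(real \<Rightarrow> real \<Rightarrow> real) \<Rightarrow> (real \<Rightarrow> real \<Rightarrow> real) \<Rightarrow> real \<Rightarrow> real \<Rightarrow> real" where
  "Wr g h = (\<lambda>x t. g x t * Dx h x t - Dx g x t * h x t)"

definition omega :: "real \<Rightarrow> real \<Rightarrow> (real \<Rightarrow> real \<Rightarrow> real) \<Rightarrow> (real \<Rightarrow> real \<Rightarrow> real) \<Rightarrow> real \<Rightarrow> real \<Rightarrow> real" where
  "omega \<xi> \<eta> f g = (\<lambda>x t. Wr f g x t / (\<xi> - \<eta>))"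

text \<open>omega(f,f) = - W(f, d f/d xi) for a family F xi x t, evaluated at xi.\<close>
definition omega_self :: "(real \<Rightarrow> real \<Rightarrow> real \<Rightarrow> real) \<Rightarrow> real \<Rightarrow> real \<Rightarrow> real \<Rightarrow> real" where
  "omega_self F \<xi> = (\<lambda>x t. - Wr (F \<xi>) (\<lambda>y s. deriv (\<lambda>\<eta>. F \<eta> y s) \<xi>) x t)"

definition An :: "nat \<Rightarrow> (nat \<Rightarrow> real) \<Rightarrow> real \<Rightarrow> (real \<Rightarrow> real \<Rightarrow> real) \<Rightarrow>
    (nat \<Rightarrow> real \<Rightarrow> real \<Rightarrow> real) \<Rightarrow> (real \<Rightarrow> real \<Rightarrow> real) \<Rightarrow> real \<Rightarrow> real \<Rightarrow> real" where
  "An n lam \<mu> u Phi \<phi> = (\<lambda>x t. Dx u x t * \<phi> x t + (4 * \<mu> - 2 * u x t) * Dx \<phi> x t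
      + (\<Sum>j\<in>{1..n}. Phi j x t / (lam j - \<mu>) * Wr (Phi j) \<phi> x t))"

definition Lax_sol :: "real \<Rightarrow> (real \<times> real) set \<Rightarrow> nat \<Rightarrow> (nat \<Rightarrow> real) \<Rightarrow>
    (real \<Rightarrow> real \<Rightarrow> real) \<Rightarrow> (nat \<Rightarrow> real \<Rightarrow> real \<Rightarrow> real) \<Rightarrow> (real \<Rightarrow> real \<Rightarrow> real) \<Rightarrow> bool" where
  "Lax_sol \<mu> \<Omega> n lam u Phi g \<longleftrightarrow>
     (\<forall>(x,t)\<in>\<Omega>. Dx (Dx g) x t + (\<mu> + u x t) * g x t = 0 \<and>
                 Dt g x t = An n lam \<mu> u Phi g x t)"

definition KdVSCS_sol :: "(real \<times> real) set \<Rightarrow> nat \<Rightarrow> (nat \<Rightarrow> real) \<Rightarrow>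
    (real \<Rightarrow> real \<Rightarrow> real) \<Rightarrow> (nat \<Rightarrow> real \<Rightarrow> real \<Rightarrow> real) \<Rightarrow> bool" where
  "KdVSCS_sol \<Omega> n lam u Phi \<longleftrightarrow>
     (\<forall>(x,t)\<in>\<Omega>.
        Dt u x t + 6 * u x t * Dx u x t + Dx (Dx (Dx u)) x t
          + 4 * (\<Sum>j\<in>{1..n}. Phi j x t * Dx (Phi j) x t) = 0 \<and>
        (\<forall>j\<in>{1..n}. Dx (Dx (Phi j)) x t + (lam j + u x t) * Phi j x t = 0))"

end

theory Submission
  imports Defs
begin

(* With G = \<partial>\<^sub>\<xi> f, differentiating the
   Lax system in \<xi> gives
     G\<^sub>x\<^sub>x + (\<xi> + u) G = -f,    G\<^sub>t = A\<^sub>n(\<xi>) G + 4 f\<^sub>x + \<Sigma> \<Phi>\<^sub>j W(\<Phi>\<^sub>j,f) / (\<lambda>\<^sub>j - \<xi>)\<^sup>2,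
   and from the Lax equations one gets the closed forms
     \<partial>\<^sub>t \<omega>(f,\<phi>) = 4 f\<^sub>x \<phi>\<^sub>x + 2 (2\<xi> + 2\<lambda> + u) f \<phi> + \<Sigma> \<omega>(f,\<Phi>\<^sub>j) \<omega>(\<phi>,\<Phi>\<^sub>j),
     \<partial>\<^sub>t \<omega>(f,f) = 4 f\<^sub>x\<^sup>2 + 2 (4\<xi> + u) f\<^sup>2 + \<Sigma> \<omega>(f,\<Phi>\<^sub>j)\<^sup>2,
   where \<Phi>\<^sub>j stands for \<phi>\<^sub>j of the statement, and for the transformed functions
     W(\<Phi>bar\<^sub>j, \<phi>bar) = W(\<Phi>\<^sub>j, \<phi>) - (\<lambda>\<^sub>j - \<lambda>) \<omega>(f,\<Phi>\<^sub>j) \<omega>(f,\<phi>) / D.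
   Substituting these, the source terms of the two sides agree summand by summand, and
   what remains is the same identity for KdV without sources, a rational identity in
   u, u\<^sub>x, f, f\<^sub>x, \<phi>, \<phi>\<^sub>x and D. The only analytic input is the symmetry of mixed partial
   derivatives of C\<^sup>\<infinity> functions of (\<xi>, x, t). *)

lemma frechet_derivative_transform_within_open:
  fixes g h :: "'a::euclidean_space \<Rightarrow> real"
  assumes "open S" "p \<in> S" "\<And>q. q \<in> S \<Longrightarrow> g q = h q" "g differentiable at p"
  shows "frechet_derivative h (at p) = frechet_derivative g (at p)"
proof -
  have "(h has_derivative frechet_derivative g (at p)) (at p)"
    using has_derivative_transform_within_open[OF _ assms(1,2)] assms(3,4) frechet_derivative_works
    by blast
  then show ?thesis
    using frechet_derivative_at by metis
qed

lemma Ck_on_cong: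
  fixes g h :: "'a::euclidean_space \<Rightarrow> real"
  assumes "open S" "\<And>p. p \<in> S \<Longrightarrow> g p = h p" "Ck_on k S g"
  shows "Ck_on k S h"
  using assms(2,3)
proof (induction k arbitrary: g h)
  case 0
  then show ?case
    by (metis Ck_on.simps(1) continuous_on_cong)
next
  case (Suc k)
  have g_diff: "g differentiable at p" if "p \<in> S" for p
    using Suc.prems(2) that assms(1) differentiable_on_eq_differentiable_at by auto
  have fd: "frechet_derivative h (at p) = frechet_derivative g (at p)" if "p \<in> S" for p
    using frechet_derivative_transform_within_open[OF assms(1) that Suc.prems(1) g_diff[OF that]] .
  have "(h has_derivative frechet_derivative g (at p)) (at p)" if "p \<in> S" for p
    using has_derivative_transform_within_open[OF _ assms(1) that] Suc.prems(1) g_diff[OF that]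
      frechet_derivative_works by blast
  then have "h differentiable_on S"
    using assms(1) differentiable_on_eq_differentiable_at differentiable_def by blast
  moreover have "Ck_on k S (\<lambda>p. frechet_derivative h (at p) b)" if "b \<in> Basis" for b
    using Suc.IH[of "\<lambda>p. frechet_derivative g (at p) b"] Suc.prems(2) that fd by simp
  ultimately show ?case
    by simp
qed

lemma Cinf_on_cong:
  fixes g h :: "'a::euclidean_space \<Rightarrow> real"
  assumes "open S" "\<And>p. p \<in> S \<Longrightarrow> g p = h p" "Cinf_on S g"
  shows "Cinf_on S h"
  using assms Ck_on_cong unfolding Cinf_on_def by blast

lemma Cinf_on_partial:
  fixes g :: "'a::euclidean_space \<Rightarrow> real"
  assumes "Cinf_on S g" "b \<in> Basis"
  shows "Cinf_on S (\<lambda>p. frechet_derivative g (at p) b)"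
  using assms unfolding Cinf_on_def by (metis Ck_on.simps(2))

lemma Cinf_on_differentiable:
  fixes g :: "'a::euclidean_space \<Rightarrow> real"
  assumes "Cinf_on S g" "open S" "p \<in> S"
  shows "g differentiable at p"
  using assms differentiable_on_eq_differentiable_at
  unfolding Cinf_on_def by (metis Ck_on.simps(2))

lemma Cinf_on_imp_continuous_on:
  fixes g :: "'a::euclidean_space \<Rightarrow> real"
  shows "Cinf_on S g \<Longrightarrow> continuous_on S g"
  unfolding Cinf_on_def by (metis Ck_on.simps(1))

lemma Cinf_on_curve_has_derivative:
  fixes g :: "'a::euclidean_space \<Rightarrow> real"
  assumes "Cinf_on S g" "open S" "c y \<in> S" "(c has_vector_derivative b) (at y)"
  shows "((\<lambda>s. g (c s)) has_real_derivative frechet_derivative g (at (c y)) b) (at y)"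
proof -
  let ?g' = "frechet_derivative g (at (c y))"
  have g: "(g has_derivative ?g') (at (c y))"
    using Cinf_on_differentiable[OF assms(1-3)] frechet_derivative_works by blast
  have "((\<lambda>s. g (c s)) has_derivative (\<lambda>h. ?g' (h *\<^sub>R b))) (at y)"
    using diff_chain_at[OF assms(4)[unfolded has_vector_derivative_def] g] by (simp add: o_def)
  moreover have "?g' (h *\<^sub>R b) = ?g' b * h" for h
    using linear_cmul[OF has_derivative_linear[OF g]] by simp
  ultimately show ?thesis
    unfolding has_field_derivative_def by (simp add: mult.commute[of _ "?g' b"])
qed

lemma Ck_on_const: "Ck_on k S (\<lambda>_. c)"
  by (induction k arbitrary: c) auto

lemma frechet_derivative_snd_comp:
  fixes g :: "'a::euclidean_space \<Rightarrow> real"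
  assumes "g differentiable at (snd z)"
  shows "frechet_derivative (\<lambda>z. g (snd z)) (at z) v = frechet_derivative g (at (snd z)) (snd v)"
    and "(\<lambda>z. g (snd z)) differentiable at z"
proof -
  have "((\<lambda>z. g (snd z)) has_derivative (\<lambda>v. frechet_derivative g (at (snd z)) (snd v))) (at z)"
    using diff_chain_at[OF has_derivative_snd[OF has_derivative_ident]] assms frechet_derivative_works
    by (fastforce simp: o_def)
  then show "frechet_derivative (\<lambda>z. g (snd z)) (at z) v = frechet_derivative g (at (snd z)) (snd v)"
    and "(\<lambda>z. g (snd z)) differentiable at z"
    by (auto simp flip: frechet_derivative_at intro: differentiableI)
qed

lemma Ck_on_snd:
  fixes g :: "'a::euclidean_space \<Rightarrow> real"
  assumes S: "open S"
  shows "Ck_on k S g \<Longrightarrow> Ck_on k (UNIV \<times> S) (\<lambda>z::'b::euclidean_space \<times> 'a. g (snd z))"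
proof (induction k arbitrary: g)
  case 0
  have "continuous_on (UNIV \<times> S) (snd :: 'b \<times> 'a \<Rightarrow> 'a)"
    by (rule continuous_on_snd[OF continuous_on_id])
  moreover have "snd ` (UNIV \<times> S :: ('b \<times> 'a) set) \<subseteq> S"
    by auto
  ultimately show ?case
    using continuous_on_compose2[of S g] 0 by (metis Ck_on.simps(1))
next
  case (Suc k)
  let ?h = "\<lambda>z::'b \<times> 'a. g (snd z)"
  have S2: "open (UNIV \<times> S :: ('b \<times> 'a) set)"
    using S by (simp add: open_Times)
  have g: "g differentiable at (snd z)" if "z \<in> UNIV \<times> S" for z :: "'b \<times> 'a"
    using Suc.prems that S by (auto simp: differentiable_on_eq_differentiable_at)
  note h = frechet_derivative_snd_comp[OF g]
  have "?h differentiable_on UNIV \<times> S"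
    using h(2) by (rule differentiable_at_imp_differentiable_on)
  moreover have "Ck_on k (UNIV \<times> S) (\<lambda>z. frechet_derivative ?h (at z) b)" if b: "b \<in> Basis" for b
  proof -
    have "Ck_on k S (\<lambda>p. frechet_derivative g (at p) (snd b))"
    proof (cases "snd b \<in> Basis")
      case True
      then show ?thesis
        using Suc.prems by simp
    next
      case False
      then have "snd b = 0"
        using b by (auto simp: Basis_prod_def)
      then have zero: "frechet_derivative g (at p) (snd b) = 0" if "p \<in> S" for p
        using Suc.prems that S frechet_derivative_works linear_0 has_derivative_linear
        by (metis Ck_on.simps(2) differentiable_on_eq_differentiable_at)
      show ?thesis
        by (rule Ck_on_cong[OF S _ Ck_on_const[of k _ 0]]) (simp add: zero)
    qed
    then have "Ck_on k (UNIV \<times> S) (\<lambda>z::'b \<times> 'a. frechet_derivative g (at (snd z)) (snd b))"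
      by (rule Suc.IH)
    then show ?thesis
      by (rule Ck_on_cong[OF S2, rotated]) (simp add: h(1))
  qed
  ultimately show ?case
    by simp
qed

lemma Cinf_on_snd:
  fixes g :: "'a::euclidean_space \<Rightarrow> real"
  assumes "open S" "Cinf_on S g"
  shows "Cinf_on (UNIV \<times> S) (\<lambda>z::'b::euclidean_space \<times> 'a. g (snd z))"
  using assms Ck_on_snd unfolding Cinf_on_def by blast

lemma mixed_partials_meet_in_square:
  fixes g gA gB gAB gBA :: "real \<Rightarrow> real \<Rightarrow> real"
  assumes h: "h > 0"
    and sq: "\<And>x y. a \<le> x \<Longrightarrow> x \<le> a + h \<Longrightarrow> b \<le> y \<Longrightarrow> y \<le> b + h \<Longrightarrow> (x,y) \<in> U"
    and d1: "\<And>x y. (x,y) \<in> U \<Longrightarrow> ((\<lambda>s. g s y) has_real_derivative gA x y) (at x)"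
    and d2: "\<And>x y. (x,y) \<in> U \<Longrightarrow> ((\<lambda>s. g x s) has_real_derivative gB x y) (at y)"
    and d12: "\<And>x y. (x,y) \<in> U \<Longrightarrow> ((\<lambda>s. gA x s) has_real_derivative gAB x y) (at y)"
    and d21: "\<And>x y. (x,y) \<in> U \<Longrightarrow> ((\<lambda>s. gB s y) has_real_derivative gBA x y) (at x)"
  obtains c d c' d' where "c \<in> {a<..<a+h}" "d \<in> {b<..<b+h}" "c' \<in> {a<..<a+h}" "d' \<in> {b<..<b+h}"
    "gAB c d = gBA c' d'"
proof -
  \<comment> \<open>Applying the mean value theorem twice, in either order, writes the second difference
    of g over the square as h * h times a value of gAB, resp. of gBA.\<close>
  have "((\<lambda>s. g s (b+h) - g s b) has_real_derivative gA x (b+h) - gA x b) (at x)"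
    if "a \<le> x" "x \<le> a + h" for x
    using that h by (intro derivative_intros d1 sq) auto
  then obtain c where c: "a < c" "c < a + h"
    "(g (a+h) (b+h) - g (a+h) b) - (g a (b+h) - g a b) = h * (gA c (b+h) - gA c b)"
    using MVT2[of a "a+h" "\<lambda>s. g s (b+h) - g s b" "\<lambda>s. gA s (b+h) - gA s b"] h by auto
  have "((\<lambda>s. gA c s) has_real_derivative gAB c y) (at y)" if "b \<le> y" "y \<le> b + h" for y
    using that c by (intro d12 sq) auto
  then obtain d where d: "b < d" "d < b + h" "gA c (b+h) - gA c b = h * gAB c d"
    using MVT2[of b "b+h" "\<lambda>s. gA c s" "\<lambda>s. gAB c s"] h by auto
  have "((\<lambda>s. g (a+h) s - g a s) has_real_derivative gB (a+h) y - gB a y) (at y)"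
    if "b \<le> y" "y \<le> b + h" for y
    using that h by (intro derivative_intros d2 sq) auto
  then obtain d' where d': "b < d'" "d' < b + h"
    "(g (a+h) (b+h) - g a (b+h)) - (g (a+h) b - g a b) = h * (gB (a+h) d' - gB a d')"
    using MVT2[of b "b+h" "\<lambda>s. g (a+h) s - g a s" "\<lambda>s. gB (a+h) s - gB a s"] h by auto
  have "((\<lambda>s. gB s d') has_real_derivative gBA x d') (at x)" if "a \<le> x" "x \<le> a + h" for x
    using that d' by (intro d21 sq) auto
  then obtain c' where c': "a < c'" "c' < a + h" "gB (a+h) d' - gB a d' = h * gBA c' d'"
    using MVT2[of a "a+h" "\<lambda>s. gB s d'" "\<lambda>s. gBA s d'"] h by auto
  have "h * h * gAB c d = h * h * gBA c' d'"
    using c(3) d(3) d'(3) c'(3) by (simp add: algebra_simps)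
  then have "gAB c d = gBA c' d'"
    using h by simp
  then show ?thesis
    using that c d c' d' by simp
qed

lemma mixed_partials_meet_in_ball:
  fixes g gA gB gAB gBA :: "real \<Rightarrow> real \<Rightarrow> real"
  assumes m: "m > 0" "ball (a,b) m \<subseteq> U"
    and d1: "\<And>x y. (x,y) \<in> U \<Longrightarrow> ((\<lambda>s. g s y) has_real_derivative gA x y) (at x)"
    and d2: "\<And>x y. (x,y) \<in> U \<Longrightarrow> ((\<lambda>s. g x s) has_real_derivative gB x y) (at y)"
    and d12: "\<And>x y. (x,y) \<in> U \<Longrightarrow> ((\<lambda>s. gA x s) has_real_derivative gAB x y) (at y)"
    and d21: "\<And>x y. (x,y) \<in> U \<Longrightarrow> ((\<lambda>s. gB s y) has_real_derivative gBA x y) (at x)"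
  obtains c d c' d' where "(c,d) \<in> ball (a,b) m" "(c',d') \<in> ball (a,b) m" "gAB c d = gBA c' d'"
proof -
  define h where "h = m / 3"
  have h: "h > 0"
    using m by (simp add: h_def)
  have ball: "(x,y) \<in> ball (a,b) m" if "a \<le> x" "x \<le> a + h" "b \<le> y" "y \<le> b + h" for x y
  proof -
    have "dist (x,y) (a,b) \<le> norm (x - a) + norm (y - b)"
      using norm_Pair_le[of "x - a" "y - b"] by (simp add: dist_norm)
    also have "\<dots> < m"
      using that m by (simp add: h_def)
    finally show ?thesis
      by (simp add: dist_commute)
  qed
  obtain c d c' d' where "c \<in> {a<..<a+h}" "d \<in> {b<..<b+h}" "c' \<in> {a<..<a+h}" "d' \<in> {b<..<b+h}"
      "gAB c d = gBA c' d'"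
    using mixed_partials_meet_in_square[OF h _ d1 d2 d12 d21] ball m(2) by blast
  then show ?thesis
    using that[of c d c' d'] ball[of c d] ball[of c' d'] by auto
qed

lemma mixed_partials_commute:
  fixes g gA gB gAB gBA :: "real \<Rightarrow> real \<Rightarrow> real"
  assumes U: "open U" "(a,b) \<in> U"
    and d1: "\<And>x y. (x,y) \<in> U \<Longrightarrow> ((\<lambda>s. g s y) has_real_derivative gA x y) (at x)"
    and d2: "\<And>x y. (x,y) \<in> U \<Longrightarrow> ((\<lambda>s. g x s) has_real_derivative gB x y) (at y)"
    and d12: "\<And>x y. (x,y) \<in> U \<Longrightarrow> ((\<lambda>s. gA x s) has_real_derivative gAB x y) (at y)"
    and d21: "\<And>x y. (x,y) \<in> U \<Longrightarrow> ((\<lambda>s. gB s y) has_real_derivative gBA x y) (at x)"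
    and c12: "continuous_on U (\<lambda>(x,y). gAB x y)" and c21: "continuous_on U (\<lambda>(x,y). gBA x y)"
  shows "gAB a b = gBA a b"
proof (rule ccontr)
  assume "gAB a b \<noteq> gBA a b"
  then have \<epsilon>: "\<bar>gAB a b - gBA a b\<bar> / 2 > 0" (is "?\<epsilon> > 0")
    by simp
  obtain r where r: "r > 0" "ball (a,b) r \<subseteq> U"
    using U open_contains_ball by blast
  obtain \<delta>1 where \<delta>1: "\<delta>1 > 0" "\<forall>q\<in>U. dist q (a,b) < \<delta>1 \<longrightarrow>
      dist ((\<lambda>(x,y). gAB x y) q) ((\<lambda>(x,y). gAB x y) (a,b)) < ?\<epsilon>"
    using c12 U(2) \<epsilon> unfolding continuous_on_iff by blast
  obtain \<delta>2 where \<delta>2: "\<delta>2 > 0" "\<forall>q\<in>U. dist q (a,b) < \<delta>2 \<longrightarrow>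
      dist ((\<lambda>(x,y). gBA x y) q) ((\<lambda>(x,y). gBA x y) (a,b)) < ?\<epsilon>"
    using c21 U(2) \<epsilon> unfolding continuous_on_iff by blast
  define m where "m = min r (min \<delta>1 \<delta>2)"
  have m: "m > 0" "ball (a,b) m \<subseteq> U"
    using r \<delta>1 \<delta>2 by (auto simp: m_def)
  obtain c d c' d' where cd: "(c,d) \<in> ball (a,b) m" "(c',d') \<in> ball (a,b) m"
    and eq: "gAB c d = gBA c' d'"
    using mixed_partials_meet_in_ball[OF m d1 d2 d12 d21] by blast
  have "(c,d) \<in> U" "(c',d') \<in> U" "dist (c,d) (a,b) < \<delta>1" "dist (c',d') (a,b) < \<delta>2"
    using cd m(2) by (auto simp: m_def dist_commute)
  then have "\<bar>gAB c d - gAB a b\<bar> < ?\<epsilon>" "\<bar>gBA c' d' - gBA a b\<bar> < ?\<epsilon>"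
    using \<delta>1(2) \<delta>2(2) by (auto simp: dist_real_def)
  then show False
    using eq by (auto simp: abs_real_def split: if_splits)
qed

lemma Cinf_on_plane_derivatives:
  fixes g :: "'a::euclidean_space \<Rightarrow> real"
  assumes g: "Cinf_on S g" and S: "open S" and p: "p + x *\<^sub>R b1 + y *\<^sub>R b2 \<in> S"
  shows "((\<lambda>s. g (p + s *\<^sub>R b1 + y *\<^sub>R b2)) has_real_derivative
      frechet_derivative g (at (p + x *\<^sub>R b1 + y *\<^sub>R b2)) b1) (at x)"
    and "((\<lambda>s. g (p + x *\<^sub>R b1 + s *\<^sub>R b2)) has_real_derivative
      frechet_derivative g (at (p + x *\<^sub>R b1 + y *\<^sub>R b2)) b2) (at y)"
proof -
  have "((\<lambda>s. p + s *\<^sub>R b1 + y *\<^sub>R b2) has_vector_derivative b1) (at x)"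
    "((\<lambda>s. p + x *\<^sub>R b1 + s *\<^sub>R b2) has_vector_derivative b2) (at y)"
    unfolding has_vector_derivative_def by (auto intro!: derivative_eq_intros)
  then show "((\<lambda>s. g (p + s *\<^sub>R b1 + y *\<^sub>R b2)) has_real_derivative
      frechet_derivative g (at (p + x *\<^sub>R b1 + y *\<^sub>R b2)) b1) (at x)"
    and "((\<lambda>s. g (p + x *\<^sub>R b1 + s *\<^sub>R b2)) has_real_derivative
      frechet_derivative g (at (p + x *\<^sub>R b1 + y *\<^sub>R b2)) b2) (at y)"
    using Cinf_on_curve_has_derivative[OF g S, of "\<lambda>s. p + s *\<^sub>R b1 + y *\<^sub>R b2" x b1]
      Cinf_on_curve_has_derivative[OF g S, of "\<lambda>s. p + x *\<^sub>R b1 + s *\<^sub>R b2" y b2] p by auto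
qed

lemma Cinf_on_partials_commute:
  fixes g :: "'a::euclidean_space \<Rightarrow> real"
  assumes g: "Cinf_on S g" and S: "open S" "p \<in> S" and b: "b1 \<in> Basis" "b2 \<in> Basis"
  shows "frechet_derivative (\<lambda>q. frechet_derivative g (at q) b1) (at p) b2
       = frechet_derivative (\<lambda>q. frechet_derivative g (at q) b2) (at p) b1"
proof -
  define L where "L = (\<lambda>x y. p + x *\<^sub>R b1 + y *\<^sub>R b2)"
  define U where "U = {(x,y). L x y \<in> S}"
  define h1 where "h1 = (\<lambda>q. frechet_derivative g (at q) b1)"
  define h2 where "h2 = (\<lambda>q. frechet_derivative g (at q) b2)"
  have h1: "Cinf_on S h1" and h2: "Cinf_on S h2"
    unfolding h1_def h2_def using Cinf_on_partial[OF g] b by auto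
  have h12: "Cinf_on S (\<lambda>q. frechet_derivative h1 (at q) b2)"
    and h21: "Cinf_on S (\<lambda>q. frechet_derivative h2 (at q) b1)"
    using Cinf_on_partial h1 h2 b by auto
  have U: "open U"
  proof -
    have "open ((\<lambda>z. L (fst z) (snd z)) -` S)"
      unfolding L_def by (intro continuous_open_vimage S(1)) (intro continuous_intros)
    then show ?thesis
      by (simp add: U_def vimage_def case_prod_beta')
  qed
  have cont: "continuous_on U (\<lambda>(x,y). k (L x y))" if "Cinf_on S k" for k
  proof -
    have "continuous_on U (\<lambda>z. k (L (fst z) (snd z)))"
      by (rule continuous_on_compose2[OF Cinf_on_imp_continuous_on[OF that]])
         (auto simp: U_def L_def intro!: continuous_intros)
    then show ?thesis
      by (simp add: case_prod_beta')
  qed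
  have "frechet_derivative h1 (at (L 0 0)) b2 = frechet_derivative h2 (at (L 0 0)) b1"
    by (rule mixed_partials_commute[OF U, where g = "\<lambda>x y. g (L x y)"
          and gA = "\<lambda>x y. h1 (L x y)" and gB = "\<lambda>x y. h2 (L x y)"])
       (use S(2) cont h12 h21 Cinf_on_plane_derivatives[OF g S(1)] Cinf_on_plane_derivatives[OF h1 S(1)]
          Cinf_on_plane_derivatives[OF h2 S(1)] in \<open>auto simp: U_def L_def h1_def h2_def\<close>)
  then show ?thesis
    by (simp add: L_def h1_def h2_def)
qed

text \<open>Functions of (x,t) alone enter as constant families \<open>\<lambda>_. g\<close> (\<open>smooth_family_const\<close>).\<close>

definition smooth_family :: "real set \<Rightarrow> (real \<times> real) set \<Rightarrow> (real \<Rightarrow> real \<Rightarrow> real \<Rightarrow> real) \<Rightarrow> bool"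
  where "smooth_family \<Xi> \<Omega> H \<longleftrightarrow> open \<Xi> \<and> open \<Omega> \<and> Cinf_on (\<Xi> \<times> \<Omega>) (\<lambda>(\<eta>,x,t). H \<eta> x t)"

definition Deta :: "(real \<Rightarrow> real \<Rightarrow> real \<Rightarrow> real) \<Rightarrow> real \<Rightarrow> real \<Rightarrow> real \<Rightarrow> real"
  where "Deta H = (\<lambda>\<eta> x t. deriv (\<lambda>e. H e x t) \<eta>)"

definition family_partial :: "real \<times> real \<times> real \<Rightarrow> (real \<Rightarrow> real \<Rightarrow> real \<Rightarrow> real) \<Rightarrow> real \<Rightarrow> real \<Rightarrow> real \<Rightarrow> real"
  where "family_partial v H = (\<lambda>\<eta> x t. frechet_derivative (\<lambda>(\<eta>,x,t). H \<eta> x t) (at (\<eta>,x,t)) v)"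

lemma smooth_family_const:
  assumes "open \<Omega>" "Cinf_on \<Omega> (\<lambda>(x,t). g x t)"
  shows "smooth_family UNIV \<Omega> (\<lambda>_. g)"
  using Cinf_on_snd[OF assms, where 'b = real] assms(1)
  by (simp add: smooth_family_def case_prod_unfold)

lemma smooth_family_open:
  assumes "smooth_family \<Xi> \<Omega> H"
  shows "open \<Xi>" "open \<Omega>" "open (\<Xi> \<times> \<Omega>)"
  using assms by (auto simp: smooth_family_def open_Times)

lemma smooth_family_has_partials:
  assumes H: "smooth_family \<Xi> \<Omega> H" and pt: "\<eta> \<in> \<Xi>" "(x,t) \<in> \<Omega>"
  shows "((\<lambda>e. H e x t) has_real_derivative family_partial (1,0,0) H \<eta> x t) (at \<eta>)"
    and "((\<lambda>y. H \<eta> y t) has_real_derivative family_partial (0,1,0) H \<eta> x t) (at x)"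
    and "((\<lambda>s. H \<eta> x s) has_real_derivative family_partial (0,0,1) H \<eta> x t) (at t)"
proof -
  have C: "Cinf_on (\<Xi> \<times> \<Omega>) (\<lambda>(\<eta>,x,t). H \<eta> x t)"
    using H by (simp add: smooth_family_def)
  note curve = Cinf_on_curve_has_derivative[OF C smooth_family_open(3)[OF H]]
  have "((\<lambda>e. (e, x, t)) has_vector_derivative (1, 0, 0)) (at \<eta>)"
    using has_vector_derivative_Pair[OF has_vector_derivative_id has_vector_derivative_const,
        of "(x,t)" \<eta> UNIV]
    by (simp add: zero_prod_def)
  then show "((\<lambda>e. H e x t) has_real_derivative family_partial (1,0,0) H \<eta> x t) (at \<eta>)"
    using curve[of "\<lambda>e. (e,x,t)"] pt by (simp add: family_partial_def)
  have "((\<lambda>y. (\<eta>, y, t)) has_vector_derivative (0, 1, 0)) (at x)"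
    by (intro has_vector_derivative_Pair has_vector_derivative_id has_vector_derivative_const)
  then show "((\<lambda>y. H \<eta> y t) has_real_derivative family_partial (0,1,0) H \<eta> x t) (at x)"
    using curve[of "\<lambda>y. (\<eta>,y,t)"] pt by (simp add: family_partial_def)
  have "((\<lambda>s. (\<eta>, x, s)) has_vector_derivative (0, 0, 1)) (at t)"
    by (intro has_vector_derivative_Pair has_vector_derivative_id has_vector_derivative_const)
  then show "((\<lambda>s. H \<eta> x s) has_real_derivative family_partial (0,0,1) H \<eta> x t) (at t)"
    using curve[of "\<lambda>s. (\<eta>,x,s)"] pt by (simp add: family_partial_def)
qed

lemma smooth_family_partial_eqs:
  assumes "smooth_family \<Xi> \<Omega> H" "\<eta> \<in> \<Xi>" "(x,t) \<in> \<Omega>"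
  shows "Deta H \<eta> x t = family_partial (1,0,0) H \<eta> x t"
    and "Dx (H \<eta>) x t = family_partial (0,1,0) H \<eta> x t"
    and "Dt (H \<eta>) x t = family_partial (0,0,1) H \<eta> x t"
  using smooth_family_has_partials[OF assms] DERIV_imp_deriv
  unfolding Deta_def Dx_def Dt_def by blast+

lemma smooth_family_has_derivatives:
  assumes "smooth_family \<Xi> \<Omega> H" "\<eta> \<in> \<Xi>" "(x,t) \<in> \<Omega>"
  shows "((\<lambda>e. H e x t) has_real_derivative Deta H \<eta> x t) (at \<eta>)"
    and "((\<lambda>y. H \<eta> y t) has_real_derivative Dx (H \<eta>) x t) (at x)"
    and "((\<lambda>s. H \<eta> x s) has_real_derivative Dt (H \<eta>) x t) (at t)"
  using smooth_family_has_partials[OF assms] smooth_family_partial_eqs[OF assms] by simp_all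

lemma smooth_family_cong:
  assumes "smooth_family \<Xi> \<Omega> H" "\<And>\<eta> x t. \<eta> \<in> \<Xi> \<Longrightarrow> (x,t) \<in> \<Omega> \<Longrightarrow> H \<eta> x t = K \<eta> x t"
  shows "smooth_family \<Xi> \<Omega> K"
  using assms Cinf_on_cong[OF smooth_family_open(3)[OF assms(1)], of "\<lambda>(\<eta>,x,t). H \<eta> x t"]
  unfolding smooth_family_def by auto

lemma smooth_family_partial:
  assumes "smooth_family \<Xi> \<Omega> H" "v \<in> Basis"
  shows "smooth_family \<Xi> \<Omega> (family_partial v H)"
  using assms Cinf_on_partial[of "\<Xi> \<times> \<Omega>" "\<lambda>(\<eta>,x,t). H \<eta> x t" v]
  unfolding smooth_family_def family_partial_def by (simp add: case_prod_unfold)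

lemma Basis_real3:
  "((1::real), (0::real), (0::real)) \<in> Basis" "((0::real), (1::real), (0::real)) \<in> Basis"
  "((0::real), (0::real), (1::real)) \<in> Basis"
  by (auto simp: Basis_prod_def zero_prod_def)

lemma smooth_family_Deta:
  assumes "smooth_family \<Xi> \<Omega> H"
  shows "smooth_family \<Xi> \<Omega> (Deta H)"
  by (rule smooth_family_cong[OF smooth_family_partial[OF assms Basis_real3(1)]])
     (simp add: smooth_family_partial_eqs(1)[OF assms])

lemma smooth_family_Dx:
  assumes "smooth_family \<Xi> \<Omega> H"
  shows "smooth_family \<Xi> \<Omega> (\<lambda>\<eta>. Dx (H \<eta>))"
  by (rule smooth_family_cong[OF smooth_family_partial[OF assms Basis_real3(2)]])
     (simp add: smooth_family_partial_eqs(2)[OF assms])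

lemma smooth_family_Dt:
  assumes "smooth_family \<Xi> \<Omega> H"
  shows "smooth_family \<Xi> \<Omega> (\<lambda>\<eta>. Dt (H \<eta>))"
  by (rule smooth_family_cong[OF smooth_family_partial[OF assms Basis_real3(3)]])
     (simp add: smooth_family_partial_eqs(3)[OF assms])

lemma family_partial_cong:
  assumes H: "smooth_family \<Xi> \<Omega> H"
    and eq: "\<And>\<eta> x t. \<eta> \<in> \<Xi> \<Longrightarrow> (x,t) \<in> \<Omega> \<Longrightarrow> H \<eta> x t = K \<eta> x t"
    and pt: "\<eta> \<in> \<Xi>" "(x,t) \<in> \<Omega>"
  shows "family_partial v K \<eta> x t = family_partial v H \<eta> x t"
proof -
  have "(\<lambda>(\<eta>,x,t). H \<eta> x t) differentiable at (\<eta>,x,t)"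
    using H pt by (intro Cinf_on_differentiable[OF _ smooth_family_open(3)]) (auto simp: smooth_family_def)
  then have "frechet_derivative (\<lambda>(\<eta>,x,t). K \<eta> x t) (at (\<eta>,x,t))
      = frechet_derivative (\<lambda>(\<eta>,x,t). H \<eta> x t) (at (\<eta>,x,t))"
    by (rule frechet_derivative_transform_within_open[OF smooth_family_open(3)[OF H], rotated 2])
       (use pt eq in auto)
  then show ?thesis
    by (simp add: family_partial_def)
qed

lemma family_partial_uncurry:
  "(\<lambda>(\<eta>,x,t). family_partial v H \<eta> x t) = (\<lambda>q. frechet_derivative (\<lambda>(\<eta>,x,t). H \<eta> x t) (at q) v)"
  by (auto simp: family_partial_def)

lemma family_partials_swap:
  assumes H: "smooth_family \<Xi> \<Omega> H" and vw: "v \<in> Basis" "w \<in> Basis"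
    and P: "\<And>\<eta> x t. \<eta> \<in> \<Xi> \<Longrightarrow> (x,t) \<in> \<Omega> \<Longrightarrow> P \<eta> x t = family_partial v H \<eta> x t"
    and Q: "\<And>\<eta> x t. \<eta> \<in> \<Xi> \<Longrightarrow> (x,t) \<in> \<Omega> \<Longrightarrow> Q \<eta> x t = family_partial w H \<eta> x t"
    and pt: "\<eta> \<in> \<Xi>" "(x,t) \<in> \<Omega>"
  shows "family_partial w P \<eta> x t = family_partial v Q \<eta> x t"
proof -
  have C: "Cinf_on (\<Xi> \<times> \<Omega>) (\<lambda>(\<eta>,x,t). H \<eta> x t)"
    using H by (simp add: smooth_family_def)
  have "family_partial w P \<eta> x t = family_partial w (family_partial v H) \<eta> x t"
    by (rule family_partial_cong[OF smooth_family_partial[OF H vw(1)] _ pt]) (simp add: P)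
  also have "\<dots> = family_partial v (family_partial w H) \<eta> x t"
    using Cinf_on_partials_commute[OF C smooth_family_open(3)[OF H] _ vw] pt
    by (simp add: family_partial_def[of _ "family_partial _ H"] family_partial_uncurry)
  also have "\<dots> = family_partial v Q \<eta> x t"
    by (rule family_partial_cong[OF smooth_family_partial[OF H vw(2)] _ pt, symmetric]) (simp add: Q)
  finally show ?thesis .
qed

lemma Dx_Deta_commute:
  assumes H: "smooth_family \<Xi> \<Omega> H" and pt: "\<eta> \<in> \<Xi>" "(x,t) \<in> \<Omega>"
  shows "Dx (Deta H \<eta>) x t = Deta (\<lambda>\<eta>. Dx (H \<eta>)) \<eta> x t"
  using family_partials_swap[OF H Basis_real3(1,2) smooth_family_partial_eqs(1,2)[OF H] pt]
    smooth_family_partial_eqs(2)[OF smooth_family_Deta[OF H] pt]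
    smooth_family_partial_eqs(1)[OF smooth_family_Dx[OF H] pt]
  by simp

lemma Dt_Deta_commute:
  assumes H: "smooth_family \<Xi> \<Omega> H" and pt: "\<eta> \<in> \<Xi>" "(x,t) \<in> \<Omega>"
  shows "Dt (Deta H \<eta>) x t = Deta (\<lambda>\<eta>. Dt (H \<eta>)) \<eta> x t"
  using family_partials_swap[OF H Basis_real3(1,3) smooth_family_partial_eqs(1,3)[OF H] pt]
    smooth_family_partial_eqs(3)[OF smooth_family_Deta[OF H] pt]
    smooth_family_partial_eqs(1)[OF smooth_family_Dt[OF H] pt]
  by simp

lemma Dt_Dx_commute:
  assumes H: "smooth_family \<Xi> \<Omega> H" and pt: "\<eta> \<in> \<Xi>" "(x,t) \<in> \<Omega>"
  shows "Dt (Dx (H \<eta>)) x t = Dx (Dt (H \<eta>)) x t"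
  using family_partials_swap[OF H Basis_real3(2,3) smooth_family_partial_eqs(2,3)[OF H] pt]
    smooth_family_partial_eqs(3)[OF smooth_family_Dx[OF H] pt]
    smooth_family_partial_eqs(2)[OF smooth_family_Dt[OF H] pt]
  by simp

lemma Dx_eqI: "((\<lambda>y. g y t) has_real_derivative v) (at x) \<Longrightarrow> Dx g x t = v"
  unfolding Dx_def by (rule DERIV_imp_deriv)

lemma Dt_eqI: "((\<lambda>s. g x s) has_real_derivative v) (at t) \<Longrightarrow> Dt g x t = v"
  unfolding Dt_def by (rule DERIV_imp_deriv)

lemma deriv_cong_open:
  assumes "open T" "y \<in> T" "\<And>s. s \<in> T \<Longrightarrow> f s = g s"
  shows "deriv f y = deriv g y"
  by (rule deriv_cong_ev[OF _ refl])
     (use eventually_nhds_in_open[OF assms(1,2)] assms(3) in \<open>auto elim: eventually_mono\<close>)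

lemma Dx_cong_open:
  assumes "open \<Omega>" "(x,t) \<in> \<Omega>" "\<And>x t. (x,t) \<in> \<Omega> \<Longrightarrow> g x t = h x t"
  shows "Dx g x t = Dx h x t"
proof -
  have "open ((\<lambda>y. (y,t)) -` \<Omega>)"
    by (intro continuous_open_vimage assms(1)) (auto intro!: continuous_intros)
  then show ?thesis
    unfolding Dx_def by (rule deriv_cong_open) (use assms(2,3) in auto)
qed

lemma DERIV_ln_abs: "(z::real) \<noteq> 0 \<Longrightarrow> ((\<lambda>z. ln \<bar>z\<bar>) has_real_derivative 1 / z) (at z)"
proof (cases "z > 0")
  case True
  have "((\<lambda>z. ln z) has_real_derivative 1 / z) (at z)"
    using DERIV_ln_divide True by blast
  then show ?thesis
    by (rule has_field_derivative_transform_within_open[where S="{0<..}"]) (use True in auto)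
next
  case False
  assume "z \<noteq> 0"
  with False have neg: "z < 0"
    by simp
  have "((\<lambda>z. ln (- z)) has_real_derivative (1 / (- z)) * (- 1)) (at z)"
    by (rule DERIV_chain2[OF DERIV_ln_divide]) (use neg in \<open>auto intro!: derivative_eq_intros\<close>)
  then have "((\<lambda>z. ln (- z)) has_real_derivative 1 / z) (at z)"
    by simp
  then show ?thesis
    by (rule has_field_derivative_transform_within_open[where S="{..<0}"]) (use neg in auto)
qed

lemma DERIV_square_div:
  fixes f T :: "real \<Rightarrow> real"
  assumes f: "(f has_real_derivative f') (at x)" and T: "(T has_real_derivative (f x)\<^sup>2) (at x)"
    and nz: "T x \<noteq> 0"
  shows "((\<lambda>y. (f y)\<^sup>2 / T y) has_real_derivative 2 * f x * f' / T x - f x ^ 4 / (T x)\<^sup>2) (at x)"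
proof -
  have "((\<lambda>y. (f y)\<^sup>2 / T y) has_real_derivative
      (2 * f x * f' * T x - (f x)\<^sup>2 * (f x)\<^sup>2) / (T x * T x)) (at x)"
    using nz by (auto intro!: derivative_eq_intros f T simp: power2_eq_square algebra_simps)
  then show ?thesis
    using nz by (simp add: field_simps power2_eq_square power4_eq_xxxx)
qed

text \<open>When T' = f^2, the function differentiated here is 2 (ln T)''.\<close>

lemma DERIV_twice_log_second_derivative:
  fixes f fx T :: "real \<Rightarrow> real"
  assumes f: "(f has_real_derivative fx x) (at x)" and fx: "(fx has_real_derivative - (c * f x)) (at x)"
    and T: "(T has_real_derivative (f x)\<^sup>2) (at x)" and nz: "T x \<noteq> 0"
  shows "((\<lambda>y. 2 * (2 * f y * fx y / T y - f y ^ 4 / (T y)\<^sup>2)) has_real_derivative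
      4 * (fx x)\<^sup>2 / T x - 4 * c * (f x)\<^sup>2 / T x - 12 * f x ^ 3 * fx x / (T x)\<^sup>2 + 4 * f x ^ 6 / T x ^ 3) (at x)"
proof -
  have "((\<lambda>y. 2 * (2 * f y * fx y / T y - f y ^ 4 / (T y)\<^sup>2)) has_real_derivative
      2 * (((2 * fx x * fx x + 2 * f x * - (c * f x)) * T x - 2 * f x * fx x * (f x)\<^sup>2) / (T x * T x)
      - (4 * f x ^ 3 * fx x * (T x)\<^sup>2 - f x ^ 4 * (2 * T x * (f x)\<^sup>2)) / ((T x)\<^sup>2 * (T x)\<^sup>2))) (at x)"
    using nz by (auto intro!: derivative_eq_intros f fx T simp: power2_eq_square algebra_simps)
  moreover have "2 * (((2 * fx x * fx x + 2 * f x * - (c * f x)) * T x - 2 * f x * fx x * (f x)\<^sup>2) / (T x * T x)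
      - (4 * f x ^ 3 * fx x * (T x)\<^sup>2 - f x ^ 4 * (2 * T x * (f x)\<^sup>2)) / ((T x)\<^sup>2 * (T x)\<^sup>2))
    = 4 * (fx x)\<^sup>2 / T x - 4 * c * (f x)\<^sup>2 / T x - 12 * f x ^ 3 * fx x / (T x)\<^sup>2 + 4 * f x ^ 6 / T x ^ 3"
    using nz by (simp add: field_simps) algebra
  ultimately show ?thesis
    by simp
qed

lemma has_Dx_omega:
  assumes g: "((\<lambda>y. g y t) has_real_derivative Dx g x t) (at x)"
      "((\<lambda>y. Dx g y t) has_real_derivative - ((\<alpha> + v) * g x t)) (at x)"
    and h: "((\<lambda>y. h y t) has_real_derivative Dx h x t) (at x)"
      "((\<lambda>y. Dx h y t) has_real_derivative - ((\<beta> + v) * h x t)) (at x)"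
    and ne: "\<alpha> \<noteq> \<beta>"
  shows "((\<lambda>y. omega \<alpha> \<beta> g h y t) has_real_derivative g x t * h x t) (at x)"
proof -
  have "((\<lambda>y. omega \<alpha> \<beta> g h y t) has_real_derivative
      (Dx g x t * Dx h x t + g x t * - ((\<beta> + v) * h x t)
        - (- ((\<alpha> + v) * g x t) * h x t + Dx g x t * Dx h x t)) / (\<alpha> - \<beta>)) (at x)"
    unfolding omega_def Wr_def
    by (auto intro!: derivative_eq_intros DERIV_cdivide g h simp: algebra_simps)
  moreover have "(Dx g x t * Dx h x t + g x t * - ((\<beta> + v) * h x t)
        - (- ((\<alpha> + v) * g x t) * h x t + Dx g x t * Dx h x t)) / (\<alpha> - \<beta>) = g x t * h x t"
    using ne by (simp add: field_simps)
  ultimately show ?thesis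
    by simp
qed

lemma has_Dx_darboux_transform:
  assumes P: "((\<lambda>y. P y t) has_real_derivative Dx P x t) (at x)"
    and f: "((\<lambda>y. f y t) has_real_derivative Dx f x t) (at x)"
    and W: "((\<lambda>y. W y t) has_real_derivative f x t * P x t) (at x)"
    and D: "((\<lambda>y. D y t) has_real_derivative (f x t)\<^sup>2) (at x)" "D x t \<noteq> 0"
  shows "((\<lambda>y. P y t - f y t * W y t / D y t) has_real_derivative
      Dx P x t - Dx f x t * W x t / D x t - (f x t)\<^sup>2 * P x t / D x t
        + f x t ^ 3 * W x t / (D x t)\<^sup>2) (at x)"
proof -
  have "((\<lambda>y. P y t - f y t * W y t / D y t) has_real_derivative
      Dx P x t - ((Dx f x t * W x t + f x t * (f x t * P x t)) * D x t - f x t * W x t * (f x t)\<^sup>2)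
        / (D x t * D x t)) (at x)"
    using D(2) by (auto intro!: derivative_eq_intros P f W D(1))
  moreover have "Dx P x t - ((Dx f x t * W x t + f x t * (f x t * P x t)) * D x t - f x t * W x t * (f x t)\<^sup>2)
        / (D x t * D x t)
      = Dx P x t - Dx f x t * W x t / D x t - (f x t)\<^sup>2 * P x t / D x t
        + f x t ^ 3 * W x t / (D x t)\<^sup>2"
    using D(2) by (simp add: field_simps power2_eq_square power3_eq_cube)
  ultimately show ?thesis
    by simp
qed

lemma Lax_solD:
  assumes "Lax_sol \<alpha> \<Omega> n lam u Phi g" "(x,t) \<in> \<Omega>"
  shows "Dx (Dx g) x t = - ((\<alpha> + u x t) * g x t)" "Dt g x t = An n lam \<alpha> u Phi g x t"
  using assms unfolding Lax_sol_def by (auto simp: algebra_simps eq_neg_iff_add_eq_0)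

lemma divide_diff_swap:
  fixes a b c d :: "'a::field"
  shows "(a - b) / (c - d) = (b - a) / (d - c)"
  using minus_divide_divide[of "a - b" "c - d"] by simp

lemma darboux_identity_without_sources:
  fixes u ux f fx p px D \<xi> \<mu> w :: real
  assumes w: "(\<xi> - \<mu>) * w = f * px - fx * p" and D: "D \<noteq> 0"
  shows "(ux * p + (4 * \<mu> - 2 * u) * px) - (ux * f + (4 * \<xi> - 2 * u) * fx) * w / D
      + f * (4 * fx\<^sup>2 + 2 * (4 * \<xi> + u) * f\<^sup>2) / D\<^sup>2 * w
      - f * (4 * fx * px + 2 * (2 * \<xi> + 2 * \<mu> + u) * f * p) / D
    = (ux + (4 * fx\<^sup>2 / D - 4 * (\<xi> + u) * f\<^sup>2 / D - 12 * f ^ 3 * fx / D\<^sup>2 + 4 * f ^ 6 / D ^ 3))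
        * (p - f * w / D)
      + (4 * \<mu> - 2 * (u + 2 * (2 * f * fx / D - f ^ 4 / D\<^sup>2)))
        * (px - fx * w / D - f\<^sup>2 * p / D + f ^ 3 * w / D\<^sup>2)"
  using D by (simp add: field_simps) (use w in algebra)

lemma darboux_wronskian:
  fixes f fx q qx p px D \<xi> l \<mu> a b :: real
  assumes a: "(\<xi> - l) * a = f * qx - fx * q" and b: "(\<xi> - \<mu>) * b = f * px - fx * p"
    and D: "D \<noteq> 0"
  shows "(q - f * a / D) * (px - fx * b / D - f\<^sup>2 * p / D + f ^ 3 * b / D\<^sup>2)
      - (qx - fx * a / D - f\<^sup>2 * q / D + f ^ 3 * a / D\<^sup>2) * (p - f * b / D)
    = (q * px - qx * p) - (l - \<mu>) * a * b / D"
  using D by (simp add: field_simps) (use a b in algebra)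

text \<open>The source terms combine through 1/(l - \<alpha>) - 1/(l - \<beta>) = (\<alpha> - \<beta>) / ((l - \<alpha>) (l - \<beta>)).\<close>

lemma omega_evolution_summand:
  fixes P Px l :: real
  assumes ne: "l \<noteq> \<alpha>" "l \<noteq> \<beta>" and gxx: "gxx = - ((\<alpha> + u) * g)" and hxx: "hxx = - ((\<beta> + u) * h)"
  shows "P / (l - \<alpha>) * (P * gx - Px * g) * hx
      + g * (Px / (l - \<beta>) * (P * hx - Px * h) + P\<^sup>2 / (l - \<beta>) * (hxx + (l + u) * h))
      - (Px / (l - \<alpha>) * (P * gx - Px * g) + P\<^sup>2 / (l - \<alpha>) * (gxx + (l + u) * g)) * h
      - gx * (P / (l - \<beta>) * (P * hx - Px * h))
    = (\<alpha> - \<beta>) * ((g * Px - gx * P) / (\<alpha> - l) * ((h * Px - hx * P) / (\<beta> - l)))"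
proof -
  have a: "(l - \<alpha>) * inverse (l - \<alpha>) = 1" and b: "(l - \<beta>) * inverse (l - \<beta>) = 1"
    using ne by auto
  have flip: "(k * Px - kx * P) / (\<gamma> - l) = (P * kx - Px * k) / (l - \<gamma>)" for k kx \<gamma>
    using divide_diff_swap[of "k * Px" "kx * P" \<gamma> l] by (simp add: mult.commute)
  show ?thesis
    unfolding flip unfolding divide_inverse using a b gxx hxx by algebra
qed

lemma omega_evolution_identity:
  fixes P Px lam :: "nat \<Rightarrow> real"
  assumes ne: "\<alpha> \<noteq> \<beta>" "\<And>j. j \<in> J \<Longrightarrow> lam j \<noteq> \<alpha>" "\<And>j. j \<in> J \<Longrightarrow> lam j \<noteq> \<beta>"
    and gxx: "gxx = - ((\<alpha> + u) * g)" and hxx: "hxx = - ((\<beta> + u) * h)"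
    and gt: "gt = ux * g + (4 * \<alpha> - 2 * u) * gx + (\<Sum>j\<in>J. P j / (lam j - \<alpha>) * (P j * gx - Px j * g))"
    and ht: "ht = ux * h + (4 * \<beta> - 2 * u) * hx + (\<Sum>j\<in>J. P j / (lam j - \<beta>) * (P j * hx - Px j * h))"
    and gxt: "gxt = uxx * g - ux * gx + (4 * \<alpha> - 2 * u) * gxx
      + (\<Sum>j\<in>J. Px j / (lam j - \<alpha>) * (P j * gx - Px j * g) + (P j)\<^sup>2 / (lam j - \<alpha>) * (gxx + (lam j + u) * g))"
    and hxt: "hxt = uxx * h - ux * hx + (4 * \<beta> - 2 * u) * hxx
      + (\<Sum>j\<in>J. Px j / (lam j - \<beta>) * (P j * hx - Px j * h) + (P j)\<^sup>2 / (lam j - \<beta>) * (hxx + (lam j + u) * h))"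
  shows "(gt * hx + g * hxt - gxt * h - gx * ht) / (\<alpha> - \<beta>)
    = 4 * gx * hx + 2 * (2 * \<alpha> + 2 * \<beta> + u) * g * h
      + (\<Sum>j\<in>J. (g * Px j - gx * P j) / (\<alpha> - lam j) * ((h * Px j - hx * P j) / (\<beta> - lam j)))"
proof -
  let ?Sg = "\<Sum>j\<in>J. P j / (lam j - \<alpha>) * (P j * gx - Px j * g)"
  let ?Sh = "\<Sum>j\<in>J. P j / (lam j - \<beta>) * (P j * hx - Px j * h)"
  let ?Sgx = "\<Sum>j\<in>J. Px j / (lam j - \<alpha>) * (P j * gx - Px j * g) + (P j)\<^sup>2 / (lam j - \<alpha>) * (gxx + (lam j + u) * g)"
  let ?Shx = "\<Sum>j\<in>J. Px j / (lam j - \<beta>) * (P j * hx - Px j * h) + (P j)\<^sup>2 / (lam j - \<beta>) * (hxx + (lam j + u) * h)"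
  have "?Sg * hx + g * ?Shx - ?Sgx * h - gx * ?Sh
      = (\<Sum>j\<in>J. P j / (lam j - \<alpha>) * (P j * gx - Px j * g) * hx
          + g * (Px j / (lam j - \<beta>) * (P j * hx - Px j * h) + (P j)\<^sup>2 / (lam j - \<beta>) * (hxx + (lam j + u) * h))
          - (Px j / (lam j - \<alpha>) * (P j * gx - Px j * g) + (P j)\<^sup>2 / (lam j - \<alpha>) * (gxx + (lam j + u) * g)) * h
          - gx * (P j / (lam j - \<beta>) * (P j * hx - Px j * h)))"
    by (simp add: sum_distrib_left sum_distrib_right sum_subtractf sum.distrib ring_distribs)
  also have "\<dots> = (\<alpha> - \<beta>)
      * (\<Sum>j\<in>J. (g * Px j - gx * P j) / (\<alpha> - lam j) * ((h * Px j - hx * P j) / (\<beta> - lam j)))"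
    unfolding sum_distrib_left
    by (rule sum.cong[OF refl omega_evolution_summand]) (use ne gxx hxx in auto)
  finally have src: "?Sg * hx + g * ?Shx - ?Sgx * h - gx * ?Sh = (\<alpha> - \<beta>)
      * (\<Sum>j\<in>J. (g * Px j - gx * P j) / (\<alpha> - lam j) * ((h * Px j - hx * P j) / (\<beta> - lam j)))" .
  have "gt * hx + g * hxt - gxt * h - gx * ht
      = (\<alpha> - \<beta>) * (4 * gx * hx + 2 * (2 * \<alpha> + 2 * \<beta> + u) * g * h
        + (\<Sum>j\<in>J. (g * Px j - gx * P j) / (\<alpha> - lam j) * ((h * Px j - hx * P j) / (\<beta> - lam j))))"
    unfolding gt ht gxt hxt using gxx hxx src by algebra
  then show ?thesis
    using ne(1) by (simp add: field_simps)
qed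

lemma omega_self_evolution_summand:
  fixes P Px l :: real
  assumes ne: "l \<noteq> \<xi>" and fxx: "fxx = - ((\<xi> + u) * f)" and Gxx: "Gxx = - f - (\<xi> + u) * G"
  shows "- (P / (l - \<xi>) * (P * fx - Px * f) * Gx
      + f * ((Px / (l - \<xi>) * (P * Gx - Px * G) + P\<^sup>2 / (l - \<xi>) * (Gxx + (l + u) * G))
        + (Px / (l - \<xi>)\<^sup>2 * (P * fx - Px * f) + P\<^sup>2 / (l - \<xi>)\<^sup>2 * (fxx + (l + u) * f)))
      - (Px / (l - \<xi>) * (P * fx - Px * f) + P\<^sup>2 / (l - \<xi>) * (fxx + (l + u) * f)) * G
      - fx * (P / (l - \<xi>) * (P * Gx - Px * G) + P / (l - \<xi>)\<^sup>2 * (P * fx - Px * f)))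
    = ((f * Px - fx * P) / (\<xi> - l))\<^sup>2"
proof -
  have a: "(l - \<xi>) * inverse (l - \<xi>) = 1"
    using ne by auto
  have flip: "(f * Px - fx * P) / (\<xi> - l) = (P * fx - Px * f) / (l - \<xi>)"
    using divide_diff_swap[of "f * Px" "fx * P" \<xi> l] by (simp add: mult.commute)
  show ?thesis
    unfolding flip unfolding divide_inverse power_inverse[symmetric] using a fxx Gxx by algebra
qed

lemma omega_self_evolution_identity:
  fixes P Px lam :: "nat \<Rightarrow> real"
  assumes ne: "\<And>j. j \<in> J \<Longrightarrow> lam j \<noteq> \<xi>"
    and fxx: "fxx = - ((\<xi> + u) * f)" and Gxx: "Gxx = - f - (\<xi> + u) * G"
    and ft: "ft = ux * f + (4 * \<xi> - 2 * u) * fx + (\<Sum>j\<in>J. P j / (lam j - \<xi>) * (P j * fx - Px j * f))"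
    and fxt: "fxt = uxx * f - ux * fx + (4 * \<xi> - 2 * u) * fxx
      + (\<Sum>j\<in>J. Px j / (lam j - \<xi>) * (P j * fx - Px j * f) + (P j)\<^sup>2 / (lam j - \<xi>) * (fxx + (lam j + u) * f))"
    and Gt: "Gt = ux * G + (4 * \<xi> - 2 * u) * Gx + (\<Sum>j\<in>J. P j / (lam j - \<xi>) * (P j * Gx - Px j * G))
      + 4 * fx + (\<Sum>j\<in>J. P j / (lam j - \<xi>)\<^sup>2 * (P j * fx - Px j * f))"
    and Gxt: "Gxt = uxx * G - ux * Gx + (4 * \<xi> - 2 * u) * Gxx
      + (\<Sum>j\<in>J. Px j / (lam j - \<xi>) * (P j * Gx - Px j * G) + (P j)\<^sup>2 / (lam j - \<xi>) * (Gxx + (lam j + u) * G))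
      + 4 * fxx
      + (\<Sum>j\<in>J. Px j / (lam j - \<xi>)\<^sup>2 * (P j * fx - Px j * f) + (P j)\<^sup>2 / (lam j - \<xi>)\<^sup>2 * (fxx + (lam j + u) * f))"
  shows "- (ft * Gx + f * Gxt - fxt * G - fx * Gt)
    = 4 * fx\<^sup>2 + 2 * (4 * \<xi> + u) * f\<^sup>2 + (\<Sum>j\<in>J. ((f * Px j - fx * P j) / (\<xi> - lam j))\<^sup>2)"
proof -
  let ?Sf = "\<Sum>j\<in>J. P j / (lam j - \<xi>) * (P j * fx - Px j * f)"
  let ?Sfx = "\<Sum>j\<in>J. Px j / (lam j - \<xi>) * (P j * fx - Px j * f) + (P j)\<^sup>2 / (lam j - \<xi>) * (fxx + (lam j + u) * f)"
  let ?SG = "\<Sum>j\<in>J. P j / (lam j - \<xi>) * (P j * Gx - Px j * G)"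
  let ?SG2 = "\<Sum>j\<in>J. P j / (lam j - \<xi>)\<^sup>2 * (P j * fx - Px j * f)"
  let ?SGx = "\<Sum>j\<in>J. Px j / (lam j - \<xi>) * (P j * Gx - Px j * G) + (P j)\<^sup>2 / (lam j - \<xi>) * (Gxx + (lam j + u) * G)"
  let ?SGx2 = "\<Sum>j\<in>J. Px j / (lam j - \<xi>)\<^sup>2 * (P j * fx - Px j * f) + (P j)\<^sup>2 / (lam j - \<xi>)\<^sup>2 * (fxx + (lam j + u) * f)"
  have "- (?Sf * Gx + f * (?SGx + ?SGx2) - ?Sfx * G - fx * (?SG + ?SG2))
      = (\<Sum>j\<in>J. - (P j / (lam j - \<xi>) * (P j * fx - Px j * f) * Gx
          + f * ((Px j / (lam j - \<xi>) * (P j * Gx - Px j * G) + (P j)\<^sup>2 / (lam j - \<xi>) * (Gxx + (lam j + u) * G))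
            + (Px j / (lam j - \<xi>)\<^sup>2 * (P j * fx - Px j * f) + (P j)\<^sup>2 / (lam j - \<xi>)\<^sup>2 * (fxx + (lam j + u) * f)))
          - (Px j / (lam j - \<xi>) * (P j * fx - Px j * f) + (P j)\<^sup>2 / (lam j - \<xi>) * (fxx + (lam j + u) * f)) * G
          - fx * (P j / (lam j - \<xi>) * (P j * Gx - Px j * G) + P j / (lam j - \<xi>)\<^sup>2 * (P j * fx - Px j * f))))"
    by (simp add: sum_distrib_left sum_distrib_right sum_subtractf sum.distrib sum_negf algebra_simps)
  also have "\<dots> = (\<Sum>j\<in>J. ((f * Px j - fx * P j) / (\<xi> - lam j))\<^sup>2)"
    by (rule sum.cong[OF refl omega_self_evolution_summand]) (use ne fxx Gxx in auto)
  finally have src: "- (?Sf * Gx + f * (?SGx + ?SGx2) - ?Sfx * G - fx * (?SG + ?SG2))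
      = (\<Sum>j\<in>J. ((f * Px j - fx * P j) / (\<xi> - lam j))\<^sup>2)" .
  have "- (ft * Gx + f * Gxt - fxt * G - fx * Gt)
      = 4 * fx\<^sup>2 + 2 * (4 * \<xi> + u) * f\<^sup>2 - (?Sf * Gx + f * (?SGx + ?SGx2) - ?Sfx * G - fx * (?SG + ?SG2))"
    unfolding ft fxt Gt Gxt using fxx Gxx by algebra
  then show ?thesis
    using src by simp
qed

lemma darboux_source_summand:
  fixes P Px p px f fx D \<xi> l \<mu> :: real
  assumes ne: "l \<noteq> \<xi>" "l \<noteq> \<mu>" "\<xi> \<noteq> \<mu>" and D: "D \<noteq> 0"
  defines "a \<equiv> (f * Px - fx * P) / (\<xi> - l)" and "w \<equiv> (f * px - fx * p) / (\<xi> - \<mu>)"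
    and "v \<equiv> (p * Px - px * P) / (\<mu> - l)"
  shows "(P - f * a / D) / (l - \<mu>)
      * ((P - f * a / D) * (px - fx * w / D - f\<^sup>2 * p / D + f ^ 3 * w / D\<^sup>2)
        - (Px - fx * a / D - f\<^sup>2 * P / D + f ^ 3 * a / D\<^sup>2) * (p - f * w / D))
    = (P - f * a / D) * (v - a * w / D)"
proof -
  have "(\<xi> - l) * a = f * Px - fx * P" "(\<xi> - \<mu>) * w = f * px - fx * p"
    using ne unfolding a_def w_def by auto
  note W = darboux_wronskian[OF this D]
  have "(P - f * a / D) / (l - \<mu>)
      * ((P - f * a / D) * (px - fx * w / D - f\<^sup>2 * p / D + f ^ 3 * w / D\<^sup>2)
        - (Px - fx * a / D - f\<^sup>2 * P / D + f ^ 3 * a / D\<^sup>2) * (p - f * w / D))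
      = (P - f * a / D) * ((P * px - Px * p) / (l - \<mu>) - a * w / D)"
    unfolding W using ne(2) by (simp add: field_simps)
  also have "(P * px - Px * p) / (l - \<mu>) = v"
    unfolding v_def using divide_diff_swap[of "p * Px" "px * P" \<mu> l] by (simp add: mult.commute)
  finally show ?thesis .
qed

lemma darboux_identity_with_sources:
  fixes P Px lam a v Pb Pbx :: "nat \<Rightarrow> real"
  assumes ne: "\<xi> \<noteq> \<mu>" "\<And>j. j \<in> J \<Longrightarrow> lam j \<noteq> \<xi>" "\<And>j. j \<in> J \<Longrightarrow> lam j \<noteq> \<mu>"
    and D: "D \<noteq> 0"
    and w: "w = (f * px - fx * p) / (\<xi> - \<mu>)"
    and a: "\<And>j. j \<in> J \<Longrightarrow> a j = (f * Px j - fx * P j) / (\<xi> - lam j)"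
    and v: "\<And>j. j \<in> J \<Longrightarrow> v j = (p * Px j - px * P j) / (\<mu> - lam j)"
    and pt: "pt = ux * p + (4 * \<mu> - 2 * u) * px + (\<Sum>j\<in>J. P j / (lam j - \<mu>) * (P j * px - Px j * p))"
    and ft: "ft = ux * f + (4 * \<xi> - 2 * u) * fx + (\<Sum>j\<in>J. P j / (lam j - \<xi>) * (P j * fx - Px j * f))"
    and wfft: "wfft = 4 * fx\<^sup>2 + 2 * (4 * \<xi> + u) * f\<^sup>2 + (\<Sum>j\<in>J. (a j)\<^sup>2)"
    and wt: "wt = 4 * fx * px + 2 * (2 * \<xi> + 2 * \<mu> + u) * f * p + (\<Sum>j\<in>J. a j * v j)"
    and ub: "ub = u + 2 * (2 * f * fx / D - f ^ 4 / D\<^sup>2)"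
    and ubx: "ubx = ux + (4 * fx\<^sup>2 / D - 4 * (\<xi> + u) * f\<^sup>2 / D - 12 * f ^ 3 * fx / D\<^sup>2 + 4 * f ^ 6 / D ^ 3)"
    and pb: "pb = p - f * w / D" and pbx: "pbx = px - fx * w / D - f\<^sup>2 * p / D + f ^ 3 * w / D\<^sup>2"
    and Pb: "\<And>j. j \<in> J \<Longrightarrow> Pb j = P j - f * a j / D"
    and Pbx: "\<And>j. j \<in> J \<Longrightarrow> Pbx j = Px j - fx * a j / D - f\<^sup>2 * P j / D + f ^ 3 * a j / D\<^sup>2"
  shows "pt - ft * w / D + f * wfft / D\<^sup>2 * w - f * wt / D
    = ubx * pb + (4 * \<mu> - 2 * ub) * pbx + (\<Sum>j\<in>J. Pb j / (lam j - \<mu>) * (Pb j * pbx - Pbx j * pb))"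
proof -
  have v': "v j = (P j * px - Px j * p) / (lam j - \<mu>)" if "j \<in> J" for j
    using v[OF that] divide_diff_swap[of "p * Px j" "px * P j" \<mu> "lam j"] by (simp add: mult.commute)
  have a': "a j = (P j * fx - Px j * f) / (lam j - \<xi>)" if "j \<in> J" for j
    using a[OF that] divide_diff_swap[of "f * Px j" "fx * P j" \<xi> "lam j"] by (simp add: mult.commute)
  have pv: "(\<Sum>j\<in>J. P j / (lam j - \<mu>) * (P j * px - Px j * p)) = (\<Sum>j\<in>J. P j * v j)"
    by (rule sum.cong) (simp_all add: v')
  have fa: "(\<Sum>j\<in>J. P j / (lam j - \<xi>) * (P j * fx - Px j * f)) = (\<Sum>j\<in>J. P j * a j)"
    by (rule sum.cong) (simp_all add: a')
  have wr: "(\<Sum>j\<in>J. Pb j / (lam j - \<mu>) * (Pb j * pbx - Pbx j * pb))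
      = (\<Sum>j\<in>J. (P j - f * a j / D) * (v j - a j * w / D))"
    using darboux_source_summand[OF ne(2) ne(3) ne(1) D] by (intro sum.cong) (auto simp: a v w pb pbx Pb Pbx)
  let ?S = "(\<Sum>j\<in>J. P j * v j) - (\<Sum>j\<in>J. P j * a j) * w / D + f * (\<Sum>j\<in>J. (a j)\<^sup>2) / D\<^sup>2 * w
      - f * (\<Sum>j\<in>J. a j * v j) / D"
  have "(\<xi> - \<mu>) * w = f * px - fx * p"
    using w ne by simp
  note pure = darboux_identity_without_sources[OF this D]
  have "pt - ft * w / D + f * wfft / D\<^sup>2 * w - f * wt / D
      = (ux * p + (4 * \<mu> - 2 * u) * px) - (ux * f + (4 * \<xi> - 2 * u) * fx) * w / D
        + f * (4 * fx\<^sup>2 + 2 * (4 * \<xi> + u) * f\<^sup>2) / D\<^sup>2 * w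
        - f * (4 * fx * px + 2 * (2 * \<xi> + 2 * \<mu> + u) * f * p) / D + ?S"
    unfolding pt ft wfft wt pv fa using D by (simp add: field_simps)
  also have "\<dots> = ubx * pb + (4 * \<mu> - 2 * ub) * pbx + ?S"
    using pure by (simp only: ub ubx pb pbx)
  also have "?S = (\<Sum>j\<in>J. (P j - f * a j / D) * (v j - a j * w / D))"
    by (simp add: algebra_simps sum_distrib_left sum_distrib_right sum_subtractf sum_divide_distrib
        sum.distrib power2_eq_square)
  finally show ?thesis
    unfolding wr .
qed

locale lax_background =
  fixes \<Omega> :: "(real \<times> real) set" and n :: nat and lam :: "nat \<Rightarrow> real"
    and u :: "real \<Rightarrow> real \<Rightarrow> real" and Phi :: "nat \<Rightarrow> real \<Rightarrow> real \<Rightarrow> real"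
  assumes u_smooth: "smooth_family UNIV \<Omega> (\<lambda>_. u)"
    and Phi_smooth: "\<And>j. j \<in> {1..n} \<Longrightarrow> smooth_family UNIV \<Omega> (\<lambda>_. Phi j)"
    and Phi_eigen: "\<And>j x t. j \<in> {1..n} \<Longrightarrow> (x,t) \<in> \<Omega> \<Longrightarrow>
      Dx (Dx (Phi j)) x t = - ((lam j + u x t) * Phi j x t)"
begin

lemma open_domain: "open \<Omega>"
  using smooth_family_open(2)[OF u_smooth] .

lemma has_Dx_u:
  assumes "(x,t) \<in> \<Omega>"
  shows "((\<lambda>y. u y t) has_real_derivative Dx u x t) (at x)"
    and "((\<lambda>y. Dx u y t) has_real_derivative Dx (Dx u) x t) (at x)"
  using smooth_family_has_derivatives(2)[OF u_smooth UNIV_I assms]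
    smooth_family_has_derivatives(2)[OF smooth_family_Dx[OF u_smooth] UNIV_I assms] by auto

lemma has_Dx_Phi:
  assumes "j \<in> {1..n}" "(x,t) \<in> \<Omega>"
  shows "((\<lambda>y. Phi j y t) has_real_derivative Dx (Phi j) x t) (at x)"
    and "((\<lambda>y. Dx (Phi j) y t) has_real_derivative - ((lam j + u x t) * Phi j x t)) (at x)"
  using smooth_family_has_derivatives(2)[OF Phi_smooth[OF assms(1)] UNIV_I assms(2)]
    smooth_family_has_derivatives(2)[OF smooth_family_Dx[OF Phi_smooth[OF assms(1)]] UNIV_I assms(2)]
    Phi_eigen[OF assms] by auto

lemma has_Dx_source_sum:
  assumes H: "smooth_family \<Xi> \<Omega> H" and pt: "\<eta> \<in> \<Xi>" "(x,t) \<in> \<Omega>"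
  shows "((\<lambda>y. \<Sum>j\<in>{1..n}. Phi j y t / c j * Wr (Phi j) (H \<eta>) y t) has_real_derivative
      (\<Sum>j\<in>{1..n}. Dx (Phi j) x t / c j * Wr (Phi j) (H \<eta>) x t
        + (Phi j x t)\<^sup>2 / c j * (Dx (Dx (H \<eta>)) x t + (lam j + u x t) * H \<eta> x t))) (at x)"
proof (rule DERIV_sum)
  fix j
  assume j: "j \<in> {1..n}"
  note g = smooth_family_has_derivatives(2)[OF H pt]
    smooth_family_has_derivatives(2)[OF smooth_family_Dx[OF H] pt]
  note P = has_Dx_Phi[OF j pt(2)]
  show "((\<lambda>y. Phi j y t / c j * Wr (Phi j) (H \<eta>) y t) has_real_derivative
      Dx (Phi j) x t / c j * Wr (Phi j) (H \<eta>) x t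
        + (Phi j x t)\<^sup>2 / c j * (Dx (Dx (H \<eta>)) x t + (lam j + u x t) * H \<eta> x t)) (at x)"
    unfolding Wr_def divide_inverse
    by (rule derivative_eq_intros g P refl | simp add: algebra_simps power2_eq_square)+
qed

lemma has_Dx_An:
  assumes H: "smooth_family \<Xi> \<Omega> H" and pt: "\<eta> \<in> \<Xi>" "(x,t) \<in> \<Omega>"
  shows "((\<lambda>y. An n lam a u Phi (H \<eta>) y t) has_real_derivative
      Dx (Dx u) x t * H \<eta> x t - Dx u x t * Dx (H \<eta>) x t + (4 * a - 2 * u x t) * Dx (Dx (H \<eta>)) x t
      + (\<Sum>j\<in>{1..n}. Dx (Phi j) x t / (lam j - a) * Wr (Phi j) (H \<eta>) x t
        + (Phi j x t)\<^sup>2 / (lam j - a) * (Dx (Dx (H \<eta>)) x t + (lam j + u x t) * H \<eta> x t))) (at x)"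
proof -
  note u = has_Dx_u[OF pt(2)]
  note g = smooth_family_has_derivatives(2)[OF H pt]
    smooth_family_has_derivatives(2)[OF smooth_family_Dx[OF H] pt]
  note S = has_Dx_source_sum[OF H pt, of "\<lambda>j. lam j - a"]
  show ?thesis
    unfolding An_def by (rule derivative_eq_intros u g S refl | simp add: algebra_simps)+
qed

lemma Dt_Dx_Lax:
  assumes H: "smooth_family \<Xi> \<Omega> H" "\<alpha> \<in> \<Xi>" "Lax_sol \<alpha> \<Omega> n lam u Phi (H \<alpha>)"
    and pt: "(x,t) \<in> \<Omega>"
  shows "Dt (Dx (H \<alpha>)) x t
    = Dx (Dx u) x t * H \<alpha> x t - Dx u x t * Dx (H \<alpha>) x t + (4 * \<alpha> - 2 * u x t) * Dx (Dx (H \<alpha>)) x t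
      + (\<Sum>j\<in>{1..n}. Dx (Phi j) x t / (lam j - \<alpha>) * Wr (Phi j) (H \<alpha>) x t
        + (Phi j x t)\<^sup>2 / (lam j - \<alpha>) * (Dx (Dx (H \<alpha>)) x t + (lam j + u x t) * H \<alpha> x t))"
proof -
  have "Dt (Dx (H \<alpha>)) x t = Dx (Dt (H \<alpha>)) x t"
    by (rule Dt_Dx_commute[OF H(1,2) pt])
  also have "\<dots> = Dx (An n lam \<alpha> u Phi (H \<alpha>)) x t"
    by (rule Dx_cong_open[OF open_domain pt]) (rule Lax_solD(2)[OF H(3)])
  also have "\<dots> = Dx (Dx u) x t * H \<alpha> x t - Dx u x t * Dx (H \<alpha>) x t
      + (4 * \<alpha> - 2 * u x t) * Dx (Dx (H \<alpha>)) x t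
      + (\<Sum>j\<in>{1..n}. Dx (Phi j) x t / (lam j - \<alpha>) * Wr (Phi j) (H \<alpha>) x t
        + (Phi j x t)\<^sup>2 / (lam j - \<alpha>) * (Dx (Dx (H \<alpha>)) x t + (lam j + u x t) * H \<alpha> x t))"
    by (rule Dx_eqI) (rule has_Dx_An[OF H(1,2) pt])
  finally show ?thesis .
qed

lemma has_Dt_Wr:
  assumes H: "smooth_family \<Xi> \<Omega> H" "\<alpha> \<in> \<Xi>" and K: "smooth_family \<Xi>' \<Omega> K" "\<beta> \<in> \<Xi>'"
    and pt: "(x,t) \<in> \<Omega>"
  shows "((\<lambda>s. Wr (H \<alpha>) (K \<beta>) x s) has_real_derivative
    Dt (H \<alpha>) x t * Dx (K \<beta>) x t + H \<alpha> x t * Dt (Dx (K \<beta>)) x t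
    - Dt (Dx (H \<alpha>)) x t * K \<beta> x t - Dx (H \<alpha>) x t * Dt (K \<beta>) x t) (at t)"
proof -
  note g = smooth_family_has_derivatives(3)[OF H pt]
    smooth_family_has_derivatives(3)[OF smooth_family_Dx[OF H(1)] H(2) pt]
  note h = smooth_family_has_derivatives(3)[OF K pt]
    smooth_family_has_derivatives(3)[OF smooth_family_Dx[OF K(1)] K(2) pt]
  show ?thesis
    unfolding Wr_def by (rule derivative_eq_intros g h refl | simp add: algebra_simps)+
qed

lemma Dt_omega_Lax:
  assumes H: "smooth_family \<Xi> \<Omega> H" "\<alpha> \<in> \<Xi>" "Lax_sol \<alpha> \<Omega> n lam u Phi (H \<alpha>)"
    and K: "smooth_family \<Xi>' \<Omega> K" "\<beta> \<in> \<Xi>'" "Lax_sol \<beta> \<Omega> n lam u Phi (K \<beta>)"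
    and ne: "\<alpha> \<noteq> \<beta>" "\<And>j. j \<in> {1..n} \<Longrightarrow> lam j \<noteq> \<alpha>" "\<And>j. j \<in> {1..n} \<Longrightarrow> lam j \<noteq> \<beta>"
    and pt: "(x,t) \<in> \<Omega>"
  shows "Dt (omega \<alpha> \<beta> (H \<alpha>) (K \<beta>)) x t
    = 4 * Dx (H \<alpha>) x t * Dx (K \<beta>) x t + 2 * (2 * \<alpha> + 2 * \<beta> + u x t) * H \<alpha> x t * K \<beta> x t
      + (\<Sum>j\<in>{1..n}. omega \<alpha> (lam j) (H \<alpha>) (Phi j) x t * omega \<beta> (lam j) (K \<beta>) (Phi j) x t)"
proof -
  have "Dt (omega \<alpha> \<beta> (H \<alpha>) (K \<beta>)) x t
      = (Dt (H \<alpha>) x t * Dx (K \<beta>) x t + H \<alpha> x t * Dt (Dx (K \<beta>)) x t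
        - Dt (Dx (H \<alpha>)) x t * K \<beta> x t - Dx (H \<alpha>) x t * Dt (K \<beta>) x t) / (\<alpha> - \<beta>)"
    unfolding omega_def by (rule Dt_eqI, rule DERIV_cdivide, rule has_Dt_Wr[OF H(1,2) K(1,2) pt])
  also have "\<dots> = 4 * Dx (H \<alpha>) x t * Dx (K \<beta>) x t + 2 * (2 * \<alpha> + 2 * \<beta> + u x t) * H \<alpha> x t * K \<beta> x t
      + (\<Sum>j\<in>{1..n}. omega \<alpha> (lam j) (H \<alpha>) (Phi j) x t * omega \<beta> (lam j) (K \<beta>) (Phi j) x t)"
    unfolding omega_def Wr_def
    by (rule omega_evolution_identity[OF ne Lax_solD(1)[OF H(3) pt] Lax_solD(1)[OF K(3) pt]
          Lax_solD(2)[OF H(3) pt, unfolded An_def Wr_def] Lax_solD(2)[OF K(3) pt, unfolded An_def Wr_def]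
          Dt_Dx_Lax[OF H pt, unfolded Wr_def] Dt_Dx_Lax[OF K pt, unfolded Wr_def]])
  finally show ?thesis .
qed

end

locale kdv_darboux = lax_background +
  fixes \<Xi> :: "real set" and F :: "real \<Rightarrow> real \<Rightarrow> real \<Rightarrow> real" and \<xi> \<mu> :: real
    and \<phi> :: "real \<Rightarrow> real \<Rightarrow> real" and e :: "real \<Rightarrow> real"
  assumes F_smooth: "smooth_family \<Xi> \<Omega> F" and \<xi>_in: "\<xi> \<in> \<Xi>"
    and F_lax: "\<And>\<eta>. \<eta> \<in> \<Xi> \<Longrightarrow> Lax_sol \<eta> \<Omega> n lam u Phi (F \<eta>)"
    and lam_notin: "\<And>j. j \<in> {1..n} \<Longrightarrow> lam j \<notin> \<Xi>"
    and \<phi>_smooth: "smooth_family UNIV \<Omega> (\<lambda>_. \<phi>)" and \<phi>_lax: "Lax_sol \<mu> \<Omega> n lam u Phi \<phi>"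
    and \<mu>_ne: "\<mu> \<noteq> \<xi>" and lam_ne_\<mu>: "\<And>j. j \<in> {1..n} \<Longrightarrow> lam j \<noteq> \<mu>"
    and D_nz: "\<And>x t. (x,t) \<in> \<Omega> \<Longrightarrow> e t + omega_self F \<xi> x t \<noteq> 0"
begin

lemma lam_ne_\<xi>: "j \<in> {1..n} \<Longrightarrow> lam j \<noteq> \<xi>"
  using lam_notin \<xi>_in by blast

lemma omega_self_eq_Wr: "omega_self F \<xi> = (\<lambda>x t. - Wr (F \<xi>) (Deta F \<xi>) x t)"
  by (simp add: omega_self_def Deta_def)

lemma Dx_Dx_Deta:
  assumes pt: "(x,t) \<in> \<Omega>"
  shows "Dx (Dx (Deta F \<xi>)) x t = - F \<xi> x t - (\<xi> + u x t) * Deta F \<xi> x t"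
proof -
  have "Dx (Dx (Deta F \<xi>)) x t = Dx (Deta (\<lambda>\<eta>. Dx (F \<eta>)) \<xi>) x t"
    by (rule Dx_cong_open[OF open_domain pt]) (rule Dx_Deta_commute[OF F_smooth \<xi>_in])
  also have "\<dots> = Deta (\<lambda>\<eta>. Dx (Dx (F \<eta>))) \<xi> x t"
    by (rule Dx_Deta_commute[OF smooth_family_Dx[OF F_smooth] \<xi>_in pt])
  also have "\<dots> = deriv (\<lambda>\<eta>. - ((\<eta> + u x t) * F \<eta> x t)) \<xi>"
    unfolding Deta_def
    by (rule deriv_cong_open[OF smooth_family_open(1)[OF F_smooth] \<xi>_in])
       (rule Lax_solD(1)[OF F_lax pt])
  also have "\<dots> = - F \<xi> x t - (\<xi> + u x t) * Deta F \<xi> x t"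
    by (rule DERIV_imp_deriv)
       (rule derivative_eq_intros smooth_family_has_derivatives(1)[OF F_smooth \<xi>_in pt] refl
         | simp add: algebra_simps)+
  finally show ?thesis .
qed

lemma has_Deta_An:
  assumes pt: "(x,t) \<in> \<Omega>"
  shows "((\<lambda>\<eta>. An n lam \<eta> u Phi (F \<eta>) x t) has_real_derivative
      An n lam \<xi> u Phi (Deta F \<xi>) x t + 4 * Dx (F \<xi>) x t
      + (\<Sum>j\<in>{1..n}. Phi j x t / (lam j - \<xi>)\<^sup>2 * Wr (Phi j) (F \<xi>) x t)) (at \<xi>)"
proof -
  note F = smooth_family_has_derivatives(1)[OF F_smooth \<xi>_in pt]
  have Fx: "((\<lambda>\<eta>. Dx (F \<eta>) x t) has_real_derivative Dx (Deta F \<xi>) x t) (at \<xi>)"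
    using smooth_family_has_derivatives(1)[OF smooth_family_Dx[OF F_smooth] \<xi>_in pt]
    by (simp add: Dx_Deta_commute[OF F_smooth \<xi>_in pt])
  have S: "((\<lambda>\<eta>. Phi j x t / (lam j - \<eta>) * Wr (Phi j) (F \<eta>) x t) has_real_derivative
      Phi j x t / (lam j - \<xi>)\<^sup>2 * Wr (Phi j) (F \<xi>) x t
        + Phi j x t / (lam j - \<xi>) * Wr (Phi j) (Deta F \<xi>) x t) (at \<xi>)"
    if "j \<in> {1..n}" for j
  proof -
    have "lam j - \<xi> \<noteq> 0"
      using lam_ne_\<xi>[OF that] by simp
    then have "((\<lambda>\<eta>. Phi j x t / (lam j - \<eta>)) has_real_derivative Phi j x t / (lam j - \<xi>)\<^sup>2) (at \<xi>)"
      by (auto intro!: derivative_eq_intros simp: power2_eq_square)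
    moreover have "((\<lambda>\<eta>. Wr (Phi j) (F \<eta>) x t) has_real_derivative Wr (Phi j) (Deta F \<xi>) x t) (at \<xi>)"
      unfolding Wr_def by (intro DERIV_diff DERIV_cmult F Fx)
    ultimately show ?thesis
      by (rule DERIV_mult[THEN DERIV_cong]) simp
  qed
  show ?thesis
    unfolding An_def
    by (rule derivative_eq_intros F Fx DERIV_sum[OF S] refl | simp add: algebra_simps sum.distrib)+
qed

lemma Dt_Deta:
  assumes pt: "(x,t) \<in> \<Omega>"
  shows "Dt (Deta F \<xi>) x t = An n lam \<xi> u Phi (Deta F \<xi>) x t + 4 * Dx (F \<xi>) x t
    + (\<Sum>j\<in>{1..n}. Phi j x t / (lam j - \<xi>)\<^sup>2 * Wr (Phi j) (F \<xi>) x t)"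
proof -
  have "Dt (Deta F \<xi>) x t = Deta (\<lambda>\<eta>. Dt (F \<eta>)) \<xi> x t"
    by (rule Dt_Deta_commute[OF F_smooth \<xi>_in pt])
  also have "\<dots> = deriv (\<lambda>\<eta>. An n lam \<eta> u Phi (F \<eta>) x t) \<xi>"
    unfolding Deta_def
    by (rule deriv_cong_open[OF smooth_family_open(1)[OF F_smooth] \<xi>_in])
       (rule Lax_solD(2)[OF F_lax pt])
  finally show ?thesis
    using DERIV_imp_deriv[OF has_Deta_An[OF pt]] by simp
qed

lemma Dt_Dx_Deta:
  assumes pt: "(x,t) \<in> \<Omega>"
  shows "Dt (Dx (Deta F \<xi>)) x t
    = Dx (Dx u) x t * Deta F \<xi> x t - Dx u x t * Dx (Deta F \<xi>) x t
      + (4 * \<xi> - 2 * u x t) * Dx (Dx (Deta F \<xi>)) x t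
      + (\<Sum>j\<in>{1..n}. Dx (Phi j) x t / (lam j - \<xi>) * Wr (Phi j) (Deta F \<xi>) x t
        + (Phi j x t)\<^sup>2 / (lam j - \<xi>) * (Dx (Dx (Deta F \<xi>)) x t + (lam j + u x t) * Deta F \<xi> x t))
      + 4 * Dx (Dx (F \<xi>)) x t
      + (\<Sum>j\<in>{1..n}. Dx (Phi j) x t / (lam j - \<xi>)\<^sup>2 * Wr (Phi j) (F \<xi>) x t
        + (Phi j x t)\<^sup>2 / (lam j - \<xi>)\<^sup>2 * (Dx (Dx (F \<xi>)) x t + (lam j + u x t) * F \<xi> x t))"
proof -
  have "Dt (Dx (Deta F \<xi>)) x t = Dx (Dt (Deta F \<xi>)) x t"
    by (rule Dt_Dx_commute[OF smooth_family_Deta[OF F_smooth] \<xi>_in pt])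
  also have "\<dots> = Dx (\<lambda>x t. An n lam \<xi> u Phi (Deta F \<xi>) x t + 4 * Dx (F \<xi>) x t
      + (\<Sum>j\<in>{1..n}. Phi j x t / (lam j - \<xi>)\<^sup>2 * Wr (Phi j) (F \<xi>) x t)) x t"
    by (rule Dx_cong_open[OF open_domain pt]) (rule Dt_Deta)
  also have "\<dots> = Dx (Dx u) x t * Deta F \<xi> x t - Dx u x t * Dx (Deta F \<xi>) x t
      + (4 * \<xi> - 2 * u x t) * Dx (Dx (Deta F \<xi>)) x t
      + (\<Sum>j\<in>{1..n}. Dx (Phi j) x t / (lam j - \<xi>) * Wr (Phi j) (Deta F \<xi>) x t
        + (Phi j x t)\<^sup>2 / (lam j - \<xi>) * (Dx (Dx (Deta F \<xi>)) x t + (lam j + u x t) * Deta F \<xi> x t))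
      + 4 * Dx (Dx (F \<xi>)) x t
      + (\<Sum>j\<in>{1..n}. Dx (Phi j) x t / (lam j - \<xi>)\<^sup>2 * Wr (Phi j) (F \<xi>) x t
        + (Phi j x t)\<^sup>2 / (lam j - \<xi>)\<^sup>2 * (Dx (Dx (F \<xi>)) x t + (lam j + u x t) * F \<xi> x t))"
    using has_Dx_An[OF smooth_family_Deta[OF F_smooth] \<xi>_in pt, of \<xi>]
      smooth_family_has_derivatives(2)[OF smooth_family_Dx[OF F_smooth] \<xi>_in pt]
      has_Dx_source_sum[OF F_smooth \<xi>_in pt, of "\<lambda>j. (lam j - \<xi>)\<^sup>2"]
    by (intro Dx_eqI DERIV_add DERIV_cmult) simp_all
  finally show ?thesis .
qed

lemma Dt_omega_self:
  assumes pt: "(x,t) \<in> \<Omega>"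
  shows "Dt (omega_self F \<xi>) x t = 4 * (Dx (F \<xi>) x t)\<^sup>2 + 2 * (4 * \<xi> + u x t) * (F \<xi> x t)\<^sup>2
    + (\<Sum>j\<in>{1..n}. (omega \<xi> (lam j) (F \<xi>) (Phi j) x t)\<^sup>2)"
proof -
  have "Dt (omega_self F \<xi>) x t
      = - (Dt (F \<xi>) x t * Dx (Deta F \<xi>) x t + F \<xi> x t * Dt (Dx (Deta F \<xi>)) x t
        - Dt (Dx (F \<xi>)) x t * Deta F \<xi> x t - Dx (F \<xi>) x t * Dt (Deta F \<xi>) x t)"
    unfolding omega_self_eq_Wr
    by (rule Dt_eqI, rule DERIV_minus, rule has_Dt_Wr[OF F_smooth \<xi>_in smooth_family_Deta[OF F_smooth] \<xi>_in pt])
  also have "\<dots> = 4 * (Dx (F \<xi>) x t)\<^sup>2 + 2 * (4 * \<xi> + u x t) * (F \<xi> x t)\<^sup>2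
    + (\<Sum>j\<in>{1..n}. (omega \<xi> (lam j) (F \<xi>) (Phi j) x t)\<^sup>2)"
    unfolding omega_def Wr_def
    by (rule omega_self_evolution_identity[OF lam_ne_\<xi> Lax_solD(1)[OF F_lax[OF \<xi>_in] pt] Dx_Dx_Deta[OF pt]
          Lax_solD(2)[OF F_lax[OF \<xi>_in] pt, unfolded An_def Wr_def]
          Dt_Dx_Lax[OF F_smooth \<xi>_in F_lax[OF \<xi>_in] pt, unfolded Wr_def]
          Dt_Deta[OF pt, unfolded An_def Wr_def] Dt_Dx_Deta[OF pt, unfolded Wr_def]])
  finally show ?thesis .
qed

abbreviation tau :: "real \<Rightarrow> real \<Rightarrow> real"
  where "tau x t \<equiv> e t + omega_self F \<xi> x t"

lemma has_Dx_F:
  assumes pt: "(x,t) \<in> \<Omega>"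
  shows "((\<lambda>y. F \<xi> y t) has_real_derivative Dx (F \<xi>) x t) (at x)"
    and "((\<lambda>y. Dx (F \<xi>) y t) has_real_derivative - ((\<xi> + u x t) * F \<xi> x t)) (at x)"
  using smooth_family_has_derivatives(2)[OF F_smooth \<xi>_in pt]
    smooth_family_has_derivatives(2)[OF smooth_family_Dx[OF F_smooth] \<xi>_in pt]
    Lax_solD(1)[OF F_lax[OF \<xi>_in] pt] by auto

lemma has_Dx_phi:
  assumes pt: "(x,t) \<in> \<Omega>"
  shows "((\<lambda>y. \<phi> y t) has_real_derivative Dx \<phi> x t) (at x)"
    and "((\<lambda>y. Dx \<phi> y t) has_real_derivative - ((\<mu> + u x t) * \<phi> x t)) (at x)"
  using smooth_family_has_derivatives(2)[OF \<phi>_smooth UNIV_I pt]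
    smooth_family_has_derivatives(2)[OF smooth_family_Dx[OF \<phi>_smooth] UNIV_I pt]
    Lax_solD(1)[OF \<phi>_lax pt] by auto

lemma has_Dx_omega_self:
  assumes pt: "(x,t) \<in> \<Omega>"
  shows "((\<lambda>y. omega_self F \<xi> y t) has_real_derivative (F \<xi> x t)\<^sup>2) (at x)"
proof -
  note f = has_Dx_F[OF pt]
  note G = smooth_family_has_derivatives(2)[OF smooth_family_Deta[OF F_smooth] \<xi>_in pt]
    smooth_family_has_derivatives(2)[OF smooth_family_Dx[OF smooth_family_Deta[OF F_smooth]] \<xi>_in pt,
      unfolded Dx_Dx_Deta[OF pt]]
  show ?thesis
    unfolding omega_self_eq_Wr Wr_def
    by (rule derivative_eq_intros f G refl | simp add: algebra_simps power2_eq_square)+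
qed

lemma has_Dx_tau:
  assumes pt: "(x,t) \<in> \<Omega>"
  shows "((\<lambda>y. tau y t) has_real_derivative (F \<xi> x t)\<^sup>2) (at x)"
  using DERIV_add[OF DERIV_const has_Dx_omega_self[OF pt]] by simp

lemma Dx_Dx_ln_tau:
  assumes pt: "(x,t) \<in> \<Omega>"
  shows "Dx (Dx (\<lambda>y s. ln \<bar>tau y s\<bar>)) x t
    = 2 * F \<xi> x t * Dx (F \<xi>) x t / tau x t - F \<xi> x t ^ 4 / (tau x t)\<^sup>2"
proof -
  have "Dx (\<lambda>y s. ln \<bar>tau y s\<bar>) x t = (F \<xi> x t)\<^sup>2 / tau x t" if "(x,t) \<in> \<Omega>" for x t
    using DERIV_chain2[OF DERIV_ln_abs[OF D_nz[OF that]] has_Dx_tau[OF that]] by (simp add: Dx_eqI)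
  then have "Dx (Dx (\<lambda>y s. ln \<bar>tau y s\<bar>)) x t = Dx (\<lambda>x t. (F \<xi> x t)\<^sup>2 / tau x t) x t"
    by (rule Dx_cong_open[OF open_domain pt])
  also have "\<dots> = 2 * F \<xi> x t * Dx (F \<xi>) x t / tau x t - F \<xi> x t ^ 4 / (tau x t)\<^sup>2"
    by (rule Dx_eqI, rule DERIV_square_div[OF has_Dx_F(1)[OF pt] has_Dx_tau[OF pt] D_nz[OF pt]])
  finally show ?thesis .
qed

lemma Dx_ubar:
  assumes pt: "(x,t) \<in> \<Omega>"
  shows "Dx (\<lambda>x t. u x t + 2 * Dx (Dx (\<lambda>y s. ln \<bar>tau y s\<bar>)) x t) x t
    = Dx u x t + (4 * (Dx (F \<xi>) x t)\<^sup>2 / tau x t - 4 * (\<xi> + u x t) * (F \<xi> x t)\<^sup>2 / tau x t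
      - 12 * F \<xi> x t ^ 3 * Dx (F \<xi>) x t / (tau x t)\<^sup>2 + 4 * F \<xi> x t ^ 6 / tau x t ^ 3)"
proof -
  have "Dx (\<lambda>x t. u x t + 2 * Dx (Dx (\<lambda>y s. ln \<bar>tau y s\<bar>)) x t) x t
      = Dx (\<lambda>x t. u x t + 2 * (2 * F \<xi> x t * Dx (F \<xi>) x t / tau x t - F \<xi> x t ^ 4 / (tau x t)\<^sup>2)) x t"
    by (rule Dx_cong_open[OF open_domain pt]) (simp add: Dx_Dx_ln_tau)
  also have "\<dots> = Dx u x t + (4 * (Dx (F \<xi>) x t)\<^sup>2 / tau x t - 4 * (\<xi> + u x t) * (F \<xi> x t)\<^sup>2 / tau x t
      - 12 * F \<xi> x t ^ 3 * Dx (F \<xi>) x t / (tau x t)\<^sup>2 + 4 * F \<xi> x t ^ 6 / tau x t ^ 3)"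
    by (rule Dx_eqI, rule DERIV_add[OF has_Dx_u(1)[OF pt]])
       (rule DERIV_twice_log_second_derivative[OF has_Dx_F[OF pt] has_Dx_tau[OF pt] D_nz[OF pt]])
  finally show ?thesis .
qed

lemma Dx_darboux_transform:
  assumes pt: "(x,t) \<in> \<Omega>" and ne: "\<beta> \<noteq> \<xi>"
    and P: "((\<lambda>y. P y t) has_real_derivative Dx P x t) (at x)"
      "((\<lambda>y. Dx P y t) has_real_derivative - ((\<beta> + u x t) * P x t)) (at x)"
  shows "Dx (\<lambda>x t. P x t - F \<xi> x t * omega \<xi> \<beta> (F \<xi>) P x t / tau x t) x t
    = Dx P x t - Dx (F \<xi>) x t * omega \<xi> \<beta> (F \<xi>) P x t / tau x t - (F \<xi> x t)\<^sup>2 * P x t / tau x t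
      + F \<xi> x t ^ 3 * omega \<xi> \<beta> (F \<xi>) P x t / (tau x t)\<^sup>2"
  by (rule Dx_eqI[where g = "\<lambda>x t. P x t - F \<xi> x t * omega \<xi> \<beta> (F \<xi>) P x t / tau x t"],
      rule has_Dx_darboux_transform[where D = "\<lambda>x t. tau x t" and f = "F \<xi>" and P = P
        and W = "omega \<xi> \<beta> (F \<xi>) P" and x = x and t = t,
        OF P(1) has_Dx_F(1)[OF pt] has_Dx_omega[OF has_Dx_F[OF pt] P ne[symmetric]]
        has_Dx_tau[OF pt] D_nz[OF pt]])

lemma darboux_identity:
  assumes pt: "(x,t) \<in> \<Omega>"
  shows "Dt \<phi> x t - Dt (F \<xi>) x t * omega \<xi> \<mu> (F \<xi>) \<phi> x t / tau x t
      + F \<xi> x t * Dt (omega_self F \<xi>) x t / (tau x t)\<^sup>2 * omega \<xi> \<mu> (F \<xi>) \<phi> x t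
      - F \<xi> x t * Dt (omega \<xi> \<mu> (F \<xi>) \<phi>) x t / tau x t
    = An n lam \<mu> (\<lambda>x t. u x t + 2 * Dx (Dx (\<lambda>y s. ln \<bar>tau y s\<bar>)) x t)
        (\<lambda>j x t. Phi j x t - F \<xi> x t * omega \<xi> (lam j) (F \<xi>) (Phi j) x t / tau x t)
        (\<lambda>x t. \<phi> x t - F \<xi> x t * omega \<xi> \<mu> (F \<xi>) \<phi> x t / tau x t) x t"
proof -
  have w: "omega \<xi> \<mu> (F \<xi>) \<phi> x t = (F \<xi> x t * Dx \<phi> x t - Dx (F \<xi>) x t * \<phi> x t) / (\<xi> - \<mu>)"
    and a: "\<And>j. omega \<xi> (lam j) (F \<xi>) (Phi j) x t
      = (F \<xi> x t * Dx (Phi j) x t - Dx (F \<xi>) x t * Phi j x t) / (\<xi> - lam j)"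
    and v: "\<And>j. omega \<mu> (lam j) \<phi> (Phi j) x t
      = (\<phi> x t * Dx (Phi j) x t - Dx \<phi> x t * Phi j x t) / (\<mu> - lam j)"
    by (simp_all add: omega_def Wr_def)
  have ub: "u x t + 2 * Dx (Dx (\<lambda>y s. ln \<bar>tau y s\<bar>)) x t
      = u x t + 2 * (2 * F \<xi> x t * Dx (F \<xi>) x t / tau x t - F \<xi> x t ^ 4 / (tau x t)\<^sup>2)"
    by (simp add: Dx_Dx_ln_tau[OF pt])
  have Phibar: "Dx (\<lambda>x t. Phi j x t - F \<xi> x t * omega \<xi> (lam j) (F \<xi>) (Phi j) x t / tau x t) x t
      = Dx (Phi j) x t - Dx (F \<xi>) x t * omega \<xi> (lam j) (F \<xi>) (Phi j) x t / tau x t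
        - (F \<xi> x t)\<^sup>2 * Phi j x t / tau x t
        + F \<xi> x t ^ 3 * omega \<xi> (lam j) (F \<xi>) (Phi j) x t / (tau x t)\<^sup>2" if "j \<in> {1..n}" for j
    by (rule Dx_darboux_transform[OF pt lam_ne_\<xi>[OF that] has_Dx_Phi[OF that pt]])
  show ?thesis
    unfolding An_def Wr_def
    by (rule darboux_identity_with_sources[OF \<mu>_ne[symmetric] lam_ne_\<xi> lam_ne_\<mu> D_nz[OF pt] w a v
          Lax_solD(2)[OF \<phi>_lax pt, unfolded An_def Wr_def]
          Lax_solD(2)[OF F_lax[OF \<xi>_in] pt, unfolded An_def Wr_def] Dt_omega_self[OF pt]
          Dt_omega_Lax[OF F_smooth \<xi>_in F_lax[OF \<xi>_in] \<phi>_smooth UNIV_I \<phi>_lax \<mu>_ne[symmetric]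
            lam_ne_\<xi> lam_ne_\<mu> pt]
          ub Dx_ubar[OF pt] refl Dx_darboux_transform[OF pt \<mu>_ne has_Dx_phi[OF pt]] refl
          Phibar])
qed

end

theorem lemma2p1:
  fixes n :: nat and lam :: "nat \<Rightarrow> real" and u :: "real \<Rightarrow> real \<Rightarrow> real"
    and Phi :: "nat \<Rightarrow> real \<Rightarrow> real \<Rightarrow> real"
    and \<Omega> :: "(real \<times> real) set" and \<Xi> :: "real set"
    and F :: "real \<Rightarrow> real \<Rightarrow> real \<Rightarrow> real" and \<xi> \<mu> :: real
    and \<phi> :: "real \<Rightarrow> real \<Rightarrow> real" and e :: "real \<Rightarrow> real"
  assumes \<Omega>_open: "open \<Omega>"
    and u_smooth: "Cinf_on \<Omega> (\<lambda>(x,t). u x t)"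
    and Phi_smooth: "\<forall>j\<in>{1..n}. Cinf_on \<Omega> (\<lambda>(x,t). Phi j x t)"
    and lam_distinct: "inj_on lam {1..n}"
    and kdv: "KdVSCS_sol \<Omega> n lam u Phi"
    and \<Xi>_open: "open \<Xi>" and \<xi>_in: "\<xi> \<in> \<Xi>"
    and \<Xi>_avoid: "\<forall>j\<in>{1..n}. lam j \<notin> \<Xi>"
    and F_smooth: "Cinf_on (\<Xi> \<times> \<Omega>) (\<lambda>(\<eta>,(x,t)). F \<eta> x t)"
    and F_lax: "\<forall>\<eta>\<in>\<Xi>. Lax_sol \<eta> \<Omega> n lam u Phi (F \<eta>)"
    and \<mu>_ne: "\<mu> \<noteq> \<xi>"
    and \<mu>_avoid: "\<forall>j\<in>{1..n}. lam j \<noteq> \<mu>"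
    and \<phi>_smooth: "Cinf_on \<Omega> (\<lambda>(x,t). \<phi> x t)"
    and \<phi>_lax: "Lax_sol \<mu> \<Omega> n lam u Phi \<phi>"
    and e_diff: "\<forall>t. e differentiable (at t)"
    and D_nz: "\<forall>(x,t)\<in>\<Omega>. e t + omega_self F \<xi> x t \<noteq> 0"
  shows "\<forall>(x,t)\<in>\<Omega>.
    (let f = F \<xi>;
         wff = omega_self F \<xi>;
         D = (\<lambda>x t. e t + wff x t);
         wfphi = omega \<xi> \<mu> f \<phi>;
         \<phi>bar = (\<lambda>x t. \<phi> x t - f x t * wfphi x t / D x t);
         ubar = (\<lambda>x t. u x t + 2 * Dx (Dx (\<lambda>y s. ln \<bar>D y s\<bar>)) x t);
         Phibar = (\<lambda>j x t. Phi j x t - f x t * omega \<xi> (lam j) f (Phi j) x t / D x t)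
     in Dt \<phi> x t - Dt f x t * wfphi x t / D x t
          + f x t * Dt wff x t / (D x t)\<^sup>2 * wfphi x t
          - f x t * Dt wfphi x t / D x t
        = An n lam \<mu> ubar Phibar \<phi>bar x t)"
proof -
  interpret kdv_darboux \<Omega> n lam u Phi \<Xi> F \<xi> \<mu> \<phi> e
  proof
    show "smooth_family UNIV \<Omega> (\<lambda>_. u)"
      by (rule smooth_family_const[OF \<Omega>_open u_smooth])
    show "smooth_family UNIV \<Omega> (\<lambda>_. Phi j)" if "j \<in> {1..n}" for j
      using smooth_family_const[OF \<Omega>_open] Phi_smooth that by blast
    show "Dx (Dx (Phi j)) x t = - ((lam j + u x t) * Phi j x t)" if "j \<in> {1..n}" "(x,t) \<in> \<Omega>" for j x t
      using kdv that unfolding KdVSCS_sol_def by (auto simp: eq_neg_iff_add_eq_0 algebra_simps)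
    show "smooth_family \<Xi> \<Omega> F"
      using \<Xi>_open \<Omega>_open F_smooth by (simp add: smooth_family_def)
    show "smooth_family UNIV \<Omega> (\<lambda>_. \<phi>)"
      by (rule smooth_family_const[OF \<Omega>_open \<phi>_smooth])
  qed (use \<xi>_in F_lax \<Xi>_avoid \<phi>_lax \<mu>_ne \<mu>_avoid D_nz in auto)
  show ?thesis
    unfolding Let_def using darboux_identity by blast
qed

end
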